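(* Let $F$ be a time-dependent Finsler metric on $M$ over a time interval containing $[t_0,T[$, let $N\subset M$ be a smooth embedded orientable hypersurface with $F_{t_0}$-unit normal field $n$, and let $\gamma:N\times\,]t_0,T[\,\to\mathcal U\subset M$ be an $(N,t_0)$-based unit fiber net. Then the following two conditions are equivalent: (A) (energy pre-extremal condition) there is a function $\rho$ on $N\times\,]t_0,T[$ such that for all $(s,t)$, $$\rho(s,t)\,\dot\gamma_t(s,t)=\sum_j\Big(\ddot\gamma_t^{\,j}(s,t)+2G^j\big(t,\gamma(s,t),\dot\gamma_t(s,t)\big)+N_0^j\big(t,\gamma(s,t),\dot\gamma_t(s,t)\big)\Big)\partial_{u^j};$$ (B) (Hamilton orthogonality) for all $s\in N$, $t\in\,]t_0,T[$ and every tangent vector $X\in T_sN$, the vector $d\gamma_{(s,t)}(X,0)$ (the derivative of $\gamma$ in the $N$-direction $X$) is $F_t$-orthogonal to the ray direction $\dot\gamma_t(s,t)$, i.e. $g_{t,\gamma(s,t),\dot\gamma_t(s,t)}\big(\dot\gamma_t(s,t),\,d\gamma_{(s,t)}(X,0)\big)=0$.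
   Context: Let $M$ be a smooth $n$-manifold, locally identified with an open subset of $\mathbb R^n$ with coordinates $u=(u^1,\dots,u^n)$; tangent vectors are written $y=y^k\partial_{u^k}$ (summation convention over repeated indices). A time-dependent Finsler metric (equivalently a regular rheonomic Lagrangean $L=F^2$) on $M$ over a time interval $I$ is a function $F:I\times TM\to[0,\infty)$, $F=F(t,u,y)$, smooth on $I\times(TM\setminus\{0\})$, positively homogeneous of degree one in $y$ ($F(t,u,ky)=kF(t,u,y)$ for $k>0$), such that for each $(t,u)$ and $y\neq0$ the matrix $g_{ij}(t,u,y)=\frac12\frac{\partial^2F^2}{\partial y^i\partial y^j}(t,u,y)$ is positive definite; $(g^{ij})$ denotes its inverse and $g_{t,u,y}(V,W)=g_{ij}(t,u,y)V^iW^j$. Write $F_t=F(t,\cdot,\cdot)$. Define $G^i(t,u,y)=\frac14 g^{il}\Big(\frac{\partial^2F^2}{\partial u^k\partial y^l}y^k-\frac{\partial F^2}{\partial u^l}\Big)$ and $N_0^i(t,u,y)=\frac12 g^{il}\frac{\partial^2F^2}{\partial t\,\partial y^l}$. For $p\in M$, a time $t$ and $W\in T_pM\setminus\{0\}$, a vector $V\in T_pM$ is called $F_t$-orthogonal to $W$ if $g_{t,p,W}(W,V)=0$. Let $N^{n-1}\subset M$ be a smooth embedded orientable hypersurface with a normal field $n$ at time $t_0$: for $s\in N$, $F(t_0,s,n(s))=1$ and every $X\in T_sN$ is $F_{t_0}$-orthogonal to $n(s)$. An $(N,t_0)$-based unit fiber net is a diffeomorphism $\gamma:N\times\,]t_0,T[\,\to\mathcal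 U$ onto an open set $\mathcal U\subset M$, extending smoothly to $t=t_0$, such that $\gamma(s,t_0)=s$, $\dot\gamma_t(s,t_0)=n(s)$ for all $s\in N$, and $F\big(t,\gamma(s,t),\dot\gamma_t(s,t)\big)=1$ for all $s\in N$, $t\in\,]t_0,T[$. Here $\dot\gamma_t,\ddot\gamma_t$ denote first and second partial derivatives with respect to $t$; the curves $t\mapsto\gamma(s,t)$ are called rays. *)

theory Defs
  imports "HOL-Analysis.Analysis"
begin

definition dirderiv :: "('a::real_normed_vector \<Rightarrow> 'b::real_normed_vector) \<Rightarrow> 'a \<Rightarrow> 'a \<Rightarrow> 'b" where
  "dirderiv f x v = vector_derivative (\<lambda>h. f (x + h *\<^sub>R v)) (at 0)"

fun iter_dd :: "('a::real_normed_vector \<Rightarrow> 'b::real_normed_vector) \<Rightarrow> 'a list \<Rightarrow> 'a \<Rightarrow> 'b" where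
  "iter_dd f [] = f"
| "iter_dd f (v # vs) = (\<lambda>x. dirderiv (iter_dd f vs) x v)"

definition smooth_on :: "'a::euclidean_space set \<Rightarrow> ('a \<Rightarrow> 'b::real_normed_vector) \<Rightarrow> bool" where
  "smooth_on S f \<longleftrightarrow> open S \<and>
     (\<forall>vs. continuous_on S (iter_dd f vs) \<and>
        (\<forall>x\<in>S. \<forall>v. (\<lambda>h. iter_dd f vs (x + h *\<^sub>R v)) differentiable (at 0)))"

definition smooth_on_set :: "'a::euclidean_space set \<Rightarrow> ('a \<Rightarrow> 'b::real_normed_vector) \<Rightarrow> bool" where
  "smooth_on_set A f \<longleftrightarrow> (\<exists>U g. A \<subseteq> U \<and> smooth_on U g \<and> (\<forall>x\<in>A. g x = f x))"

definition embedded_hypersurface :: "(real^'n) set \<Rightarrow> bool" where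
  "embedded_hypersurface N \<longleftrightarrow>
     (\<forall>s\<in>N. \<exists>W (\<phi>::real^'n \<Rightarrow> real). open W \<and> s \<in> W \<and> smooth_on W \<phi> \<and>
        (\<forall>x\<in>W. \<exists>v. dirderiv \<phi> x v \<noteq> 0) \<and> N \<inter> W = {x\<in>W. \<phi> x = 0})"

definition tangent_space :: "(real^'n) set \<Rightarrow> real^'n \<Rightarrow> (real^'n) set" where
  "tangent_space N s = {X. \<exists>c. c 0 = s \<and> (\<forall>h. c h \<in> N) \<and> (c has_vector_derivative X) (at 0)}"

definition orientable_hypersurface :: "(real^'n) set \<Rightarrow> bool" where
  "orientable_hypersurface N \<longleftrightarrow>
     (\<exists>\<nu>. continuous_on N \<nu> \<and> (\<forall>s\<in>N. \<nu> s \<notin> span (tangent_space N s)))"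

type_synonym 'n tfun = "real \<Rightarrow> real^'n \<Rightarrow> real^'n \<Rightarrow> real"

definition dY :: "'n::finite \<Rightarrow> 'n tfun \<Rightarrow> 'n tfun" where
  "dY i f = (\<lambda>t u y. deriv (\<lambda>h. f t u (y + h *\<^sub>R axis i 1)) 0)"

definition dU :: "'n::finite \<Rightarrow> 'n tfun \<Rightarrow> 'n tfun" where
  "dU k f = (\<lambda>t u y. deriv (\<lambda>h. f t (u + h *\<^sub>R axis k 1) y) 0)"

definition dT :: "'n::finite tfun \<Rightarrow> 'n tfun" where
  "dT f = (\<lambda>t u y. deriv (\<lambda>\<tau>. f \<tau> u y) t)"

definition Lag :: "'n::finite tfun \<Rightarrow> 'n tfun" where
  "Lag F = (\<lambda>t u y. (F t u y)\<^sup>2)"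

definition gmat :: "'n::finite tfun \<Rightarrow> real \<Rightarrow> real^'n \<Rightarrow> real^'n \<Rightarrow> real^'n^'n" where
  "gmat F t u y = (\<chi> i j. (1/2) * dY i (dY j (Lag F)) t u y)"

definition gform :: "'n::finite tfun \<Rightarrow> real \<Rightarrow> real^'n \<Rightarrow> real^'n \<Rightarrow> real^'n \<Rightarrow> real^'n \<Rightarrow> real" where
  "gform F t u y V W = (\<Sum>i\<in>UNIV. \<Sum>j\<in>UNIV. gmat F t u y $ i $ j * V $ i * W $ j)"

definition ginv :: "'n::finite tfun \<Rightarrow> real \<Rightarrow> real^'n \<Rightarrow> real^'n \<Rightarrow> real^'n^'n" where
  "ginv F t u y = matrix_inv (gmat F t u y)"

definition Gspray :: "'n::finite tfun \<Rightarrow> real \<Rightarrow> real^'n \<Rightarrow> real^'n \<Rightarrow> real^'n" where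
  "Gspray F t u y = (\<chi> i. (1/4) * (\<Sum>l\<in>UNIV. ginv F t u y $ i $ l *
      ((\<Sum>k\<in>UNIV. dU k (dY l (Lag F)) t u y * y $ k) - dU l (Lag F) t u y)))"

definition N0 :: "'n::finite tfun \<Rightarrow> real \<Rightarrow> real^'n \<Rightarrow> real^'n \<Rightarrow> real^'n" where
  "N0 F t u y = (\<chi> i. (1/2) * (\<Sum>l\<in>UNIV. ginv F t u y $ i $ l * dT (dY l (Lag F)) t u y))"

definition time_finsler :: "real set \<Rightarrow> (real^'n) set \<Rightarrow> 'n::finite tfun \<Rightarrow> bool" where
  "time_finsler I M F \<longleftrightarrow>
     is_interval I \<and> open M \<and>
     smooth_on_set (I \<times> M \<times> (UNIV - {0})) (\<lambda>(t, u, y). F t u y) \<and>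
     (\<forall>t\<in>I. \<forall>u\<in>M. \<forall>y. F t u y \<ge> 0) \<and>
     (\<forall>t\<in>I. \<forall>u\<in>M. \<forall>y. \<forall>k>0. F t u (k *\<^sub>R y) = k * F t u y) \<and>
     (\<forall>t\<in>I. \<forall>u\<in>M. \<forall>y. y \<noteq> 0 \<longrightarrow> (\<forall>V. V \<noteq> 0 \<longrightarrow> gform F t u y V V > 0))"

definition tvel :: "(real^'n \<Rightarrow> real \<Rightarrow> real^'n) \<Rightarrow> real^'n \<Rightarrow> real \<Rightarrow> real^'n" where
  "tvel \<gamma> s t = vector_derivative (\<gamma> s) (at t)"

definition tacc :: "(real^'n \<Rightarrow> real \<Rightarrow> real^'n) \<Rightarrow> real^'n \<Rightarrow> real \<Rightarrow> real^'n" where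
  "tacc \<gamma> s t = vector_derivative (tvel \<gamma> s) (at t)"

definition unit_normal_field ::
  "'n::finite tfun \<Rightarrow> real \<Rightarrow> (real^'n) set \<Rightarrow> (real^'n \<Rightarrow> real^'n) \<Rightarrow> bool" where
  "unit_normal_field F t0 N n \<longleftrightarrow> smooth_on_set N n \<and>
     (\<forall>s\<in>N. F t0 s (n s) = 1 \<and> (\<forall>X\<in>tangent_space N s. gform F t0 s (n s) (n s) X = 0))"

definition unit_fiber_net ::
  "'n::finite tfun \<Rightarrow> (real^'n) set \<Rightarrow> real \<Rightarrow> real \<Rightarrow> (real^'n \<Rightarrow> real^'n)
   \<Rightarrow> (real^'n \<Rightarrow> real \<Rightarrow> real^'n) \<Rightarrow> (real^'n) set \<Rightarrow> bool" where
  "unit_fiber_net F N t0 T n \<gamma> U \<longleftrightarrow>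
     open U \<and>
     bij_betw (\<lambda>(s, t). \<gamma> s t) (N \<times> {t0<..<T}) U \<and>
     smooth_on_set (N \<times> {t0..<T}) (\<lambda>(s, t). \<gamma> s t) \<and>
     smooth_on U (inv_into (N \<times> {t0<..<T}) (\<lambda>(s, t). \<gamma> s t)) \<and>
     (\<forall>s\<in>N. \<gamma> s t0 = s \<and> vector_derivative (\<gamma> s) (at t0 within {t0..<T}) = n s) \<and>
     (\<forall>s\<in>N. \<forall>t\<in>{t0<..<T}. F t (\<gamma> s t) (tvel \<gamma> s t) = 1)"

end

theory Submission
  imports Defs
begin

text \<open>
  Fix a direction X tangent to N, let Z = d\<gamma>(X, 0) be the corresponding variation of the net and
  h = g(\<gamma>', Z) the defect of Hamilton orthogonality along the ray through s, where g is taken at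
  the ray velocity \<gamma>'. Differentiating h in t, the term containing the t-derivative of Z cancels
  against the u-derivative of L = F^2, because the unit speed condition L(t, \<gamma>, \<gamma>') = 1 holds
  identically in s. What remains is h' = E(Z), where E = g(\<gamma>'' + 2G + N0) is the Euler--Lagrange
  covector (1/2)(d/dt \<partial>L/\<partial>y - \<partial>L/\<partial>u) of the ray.

  If \<gamma>'' + 2G + N0 = \<rho> \<gamma>', then h' = \<rho> h, and h(t0) = 0 because n is orthogonal to N, so
  h vanishes identically by a Gr\<ouml>nwall argument. Conversely, if h vanishes for all X then E(Z) = 0
  and g(\<gamma>', Z) = 0 for every variation Z. Since the differential of the net is onto, every vector
  is Z + \<tau>\<gamma>', so E = \<rho> g(\<gamma>') with \<rho> = E(\<gamma>') (using g(\<gamma>', \<gamma>') = 1), and nondegeneracy of g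
  gives \<gamma>'' + 2G + N0 = \<rho> \<gamma>'.
\<close>

section \<open>Directional derivatives of smooth maps\<close>

lemma has_vector_derivative_dirderiv:
  "(\<lambda>h. f (x + h *\<^sub>R v)) differentiable (at 0) \<Longrightarrow>
   ((\<lambda>h. f (x + h *\<^sub>R v)) has_vector_derivative dirderiv f x v) (at 0)"
  by (simp add: dirderiv_def vector_derivative_works)

lemma has_vector_derivative_dirderiv_along_line:
  assumes "(\<lambda>h. f ((p + \<tau> *\<^sub>R b) + h *\<^sub>R b)) differentiable (at 0)"
  shows "((\<lambda>\<sigma>. f (p + \<sigma> *\<^sub>R b)) has_vector_derivative dirderiv f (p + \<tau> *\<^sub>R b) b) (at \<tau>)"
proof -
  have shift: "((\<lambda>\<sigma>::real. \<sigma> - \<tau>) has_vector_derivative 1) (at \<tau>)"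
    by (auto intro!: derivative_eq_intros simp: has_real_derivative_iff_has_vector_derivative[symmetric])
  have "((\<lambda>h. f ((p + \<tau> *\<^sub>R b) + h *\<^sub>R b)) has_vector_derivative dirderiv f (p + \<tau> *\<^sub>R b) b)
      (at ((\<lambda>\<sigma>. \<sigma> - \<tau>) \<tau>))"
    using has_vector_derivative_dirderiv[OF assms] by simp
  from vector_diff_chain_at[OF shift this] show ?thesis
    by (simp add: o_def algebra_simps)
qed

lemma eventually_line_in_open:
  fixes x v :: "'a::real_normed_vector"
  assumes "open W" "x \<in> W"
  shows "eventually (\<lambda>h::real. x + h *\<^sub>R v \<in> W) (nhds 0)"
proof -
  have "continuous_on UNIV (\<lambda>h::real. x + h *\<^sub>R v)" by (intro continuous_intros)
  then have "open ((\<lambda>h::real. x + h *\<^sub>R v) -` W \<inter> UNIV)"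
    using assms continuous_on_open_vimage[of UNIV "\<lambda>h::real. x + h *\<^sub>R v"] by blast
  then show ?thesis
    using assms unfolding eventually_nhds by (intro exI[of _ "(\<lambda>h::real. x + h *\<^sub>R v) -` W"]) auto
qed

lemma iter_dd_append: "iter_dd (iter_dd f vs) ws = iter_dd f (ws @ vs)"
  by (induction ws) auto

lemma iter_dd_cong_open:
  assumes "open W" "\<And>x. x \<in> W \<Longrightarrow> f x = g x" "x \<in> W"
  shows "iter_dd f vs x = iter_dd g vs x"
  using assms(3)
proof (induction vs arbitrary: x)
  case Nil then show ?case using assms by simp
next
  case (Cons v vs)
  have ev: "eventually (\<lambda>h. iter_dd f vs (x + h *\<^sub>R v) = iter_dd g vs (x + h *\<^sub>R v)) (nhds 0)"
    using eventually_line_in_open[OF assms(1) Cons.prems] by eventually_elim (use Cons.IH in auto)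
  show ?case unfolding iter_dd.simps dirderiv_def
    by (rule vector_derivative_cong_eq) (use ev in \<open>auto elim: eventually_mono\<close>)
qed

lemma smooth_on_iter_dd: "smooth_on S f \<Longrightarrow> smooth_on S (iter_dd f vs)"
  unfolding smooth_on_def by (simp add: iter_dd_append)

lemma smooth_on_dirderiv: "smooth_on S f \<Longrightarrow> smooth_on S (\<lambda>x. dirderiv f x v)"
  using smooth_on_iter_dd[of S f "[v]"] by simp

lemma smooth_on_imp_open: "smooth_on S f \<Longrightarrow> open S"
  unfolding smooth_on_def by simp

lemma smooth_on_imp_continuous_on: "smooth_on S f \<Longrightarrow> continuous_on S f"
  unfolding smooth_on_def by (metis iter_dd.simps(1))

lemma smooth_on_imp_continuous_at: "smooth_on S f \<Longrightarrow> x \<in> S \<Longrightarrow> continuous (at x) f"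
  using smooth_on_imp_continuous_on smooth_on_imp_open continuous_on_eq_continuous_at by blast

lemma smooth_on_differentiable_line:
  "smooth_on S f \<Longrightarrow> x \<in> S \<Longrightarrow> (\<lambda>h. f (x + h *\<^sub>R v)) differentiable (at 0)"
  unfolding smooth_on_def by (metis iter_dd.simps(1))

lemma smooth_on_has_vector_derivative_dirderiv:
  "smooth_on S f \<Longrightarrow> x \<in> S \<Longrightarrow> ((\<lambda>h. f (x + h *\<^sub>R v)) has_vector_derivative dirderiv f x v) (at 0)"
  by (intro has_vector_derivative_dirderiv smooth_on_differentiable_line)

lemma smooth_on_has_real_derivative_dirderiv:
  fixes f :: "'a::euclidean_space \<Rightarrow> real"
  shows "smooth_on S f \<Longrightarrow> x \<in> S \<Longrightarrow> DERIV (\<lambda>h. f (x + h *\<^sub>R v)) 0 :> dirderiv f x v"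
  using smooth_on_has_vector_derivative_dirderiv
  by (simp add: has_real_derivative_iff_has_vector_derivative)

lemma continuous_on_eventually_near:
  fixes f :: "'a::metric_space \<Rightarrow> 'b::metric_space"
  assumes "continuous_on S f" "open S" "x \<in> S" "e > 0"
  shows "\<forall>\<^sub>F y in nhds x. y \<in> S \<and> dist (f y) (f x) < e"
proof -
  have "isCont f x" using assms continuous_on_eq_continuous_at by blast
  then have "(f \<longlongrightarrow> f x) (nhds x)"
    unfolding continuous_at by (rule tendsto_at_iff_tendsto_nhds[THEN iffD1])
  then have "\<forall>\<^sub>F y in nhds x. dist (f y) (f x) < e" using assms(4) by (rule tendstoD)
  with eventually_nhds_in_open[OF assms(2,3)] show ?thesis by eventually_elim blast
qed

subsection \<open>Continuous directional derivatives give a Fr\<eacute>chet derivative\<close>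

lemma dirderiv_increment_bound:
  assumes diff: "\<And>\<sigma>. \<sigma> \<in> closed_segment 0 c \<Longrightarrow> (\<lambda>h. f ((q + \<sigma> *\<^sub>R b) + h *\<^sub>R b)) differentiable (at 0)"
    and close: "\<And>\<sigma>. \<sigma> \<in> closed_segment 0 c \<Longrightarrow> norm (dirderiv f (q + \<sigma> *\<^sub>R b) b - d) \<le> \<epsilon>"
  shows "norm (f (q + c *\<^sub>R b) - f q - c *\<^sub>R d) \<le> \<epsilon> * \<bar>c\<bar>"
proof -
  define \<phi> where "\<phi> \<sigma> = f (q + \<sigma> *\<^sub>R b) - \<sigma> *\<^sub>R d" for \<sigma>
  have "(\<phi> has_derivative (\<lambda>h. h *\<^sub>R (dirderiv f (q + \<sigma> *\<^sub>R b) b - d))) (at \<sigma> within closed_segment 0 c)"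
    if "\<sigma> \<in> closed_segment 0 c" for \<sigma>
  proof -
    have "((\<lambda>\<sigma>. f (q + \<sigma> *\<^sub>R b)) has_vector_derivative dirderiv f (q + \<sigma> *\<^sub>R b) b) (at \<sigma>)"
      by (rule has_vector_derivative_dirderiv_along_line) (rule diff[OF that])
    then have "(\<phi> has_vector_derivative (dirderiv f (q + \<sigma> *\<^sub>R b) b - d)) (at \<sigma>)"
      unfolding \<phi>_def by (auto intro!: derivative_eq_intros)
    then show ?thesis
      by (simp add: has_vector_derivative_def has_derivative_at_withinI scaleR_diff_right)
  qed
  moreover have "onorm (\<lambda>h::real. h *\<^sub>R (dirderiv f (q + \<sigma> *\<^sub>R b) b - d)) \<le> \<epsilon>"
    if "\<sigma> \<in> closed_segment 0 c" for \<sigma>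
  proof -
    have "onorm (\<lambda>h::real. h *\<^sub>R (dirderiv f (q + \<sigma> *\<^sub>R b) b - d))
        = norm (dirderiv f (q + \<sigma> *\<^sub>R b) b - d)"
      using onorm_scaleR_left[OF bounded_linear_ident] by (simp add: onorm_id)
    with close[OF that] show ?thesis by simp
  qed
  ultimately have "norm (\<phi> c - \<phi> 0) \<le> \<epsilon> * norm (c - 0)"
    by (intro differentiable_bound[OF convex_closed_segment]) auto
  moreover have "\<phi> c - \<phi> 0 = f (q + c *\<^sub>R b) - f q - c *\<^sub>R d"
    by (simp add: \<phi>_def algebra_simps)
  ultimately show ?thesis by simp
qed

definition coord_path :: "(nat \<Rightarrow> 'a::euclidean_space) \<Rightarrow> 'a \<Rightarrow> 'a \<Rightarrow> nat \<Rightarrow> 'a" where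
  "coord_path \<beta> x v k = x + (\<Sum>i<k. (v \<bullet> \<beta> i) *\<^sub>R \<beta> i)"

lemma coord_path_Suc: "coord_path \<beta> x v (Suc k) = coord_path \<beta> x v k + (v \<bullet> \<beta> k) *\<^sub>R \<beta> k"
  by (simp add: coord_path_def)

lemma coord_path_DIM:
  assumes "bij_betw \<beta> {..<DIM('a)} (Basis :: 'a::euclidean_space set)"
  shows "coord_path \<beta> x v DIM('a) = x + v"
proof -
  have "(\<Sum>i<DIM('a). (v \<bullet> \<beta> i) *\<^sub>R \<beta> i) = (\<Sum>b\<in>Basis. (v \<bullet> b) *\<^sub>R b)"
    using sum.reindex_bij_betw[OF assms, of "\<lambda>b. (v \<bullet> b) *\<^sub>R b"] by simp
  then show ?thesis unfolding coord_path_def by (simp add: euclidean_representation)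
qed

lemma sum_abs_inner_Basis_le:
  assumes "bij_betw \<beta> {..<DIM('a)} (Basis :: 'a::euclidean_space set)"
  shows "(\<Sum>i<DIM('a). \<bar>v \<bullet> \<beta> i\<bar>) \<le> DIM('a) * norm v"
proof -
  have "(\<Sum>i<DIM('a). \<bar>v \<bullet> \<beta> i\<bar>) \<le> (\<Sum>i<DIM('a). norm v)"
    using bij_betw_apply[OF assms] by (intro sum_mono Basis_le_norm) auto
  then show ?thesis by simp
qed

lemma norm_coord_path_le:
  assumes \<beta>: "bij_betw \<beta> {..<DIM('a)} (Basis :: 'a::euclidean_space set)"
    and k: "k < DIM('a)" and \<sigma>: "\<bar>\<sigma>\<bar> \<le> \<bar>v \<bullet> \<beta> k\<bar>"
  shows "norm (coord_path \<beta> x v k + \<sigma> *\<^sub>R \<beta> k - x) \<le> DIM('a) * norm v"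
proof -
  have \<beta>B: "i < DIM('a) \<Longrightarrow> \<beta> i \<in> Basis" for i using bij_betw_apply[OF \<beta>] by simp
  have "norm (coord_path \<beta> x v k + \<sigma> *\<^sub>R \<beta> k - x) \<le> norm (\<Sum>i<k. (v \<bullet> \<beta> i) *\<^sub>R \<beta> i) + norm (\<sigma> *\<^sub>R \<beta> k)"
    unfolding coord_path_def by (metis add_diff_cancel_left' add.assoc norm_triangle_ineq)
  also have "\<dots> \<le> (\<Sum>i<k. \<bar>v \<bullet> \<beta> i\<bar>) + \<bar>v \<bullet> \<beta> k\<bar>"
  proof (rule add_mono)
    have "norm (\<Sum>i<k. (v \<bullet> \<beta> i) *\<^sub>R \<beta> i) \<le> (\<Sum>i<k. norm ((v \<bullet> \<beta> i) *\<^sub>R \<beta> i))"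
      by (rule norm_sum)
    also have "\<dots> = (\<Sum>i<k. \<bar>v \<bullet> \<beta> i\<bar>)"
      using k \<beta>B by (intro sum.cong) auto
    finally show "norm (\<Sum>i<k. (v \<bullet> \<beta> i) *\<^sub>R \<beta> i) \<le> (\<Sum>i<k. \<bar>v \<bullet> \<beta> i\<bar>)" .
    show "norm (\<sigma> *\<^sub>R \<beta> k) \<le> \<bar>v \<bullet> \<beta> k\<bar>" using \<sigma> \<beta>B[OF k] by simp
  qed
  also have "\<dots> = (\<Sum>i<Suc k. \<bar>v \<bullet> \<beta> i\<bar>)" by simp
  also have "\<dots> \<le> (\<Sum>i<DIM('a). \<bar>v \<bullet> \<beta> i\<bar>)"
    using k by (intro sum_mono2) auto
  also have "\<dots> \<le> DIM('a) * norm v" by (rule sum_abs_inner_Basis_le[OF \<beta>])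
  finally show ?thesis .
qed

lemma has_derivative_of_continuous_dirderiv:
  fixes f :: "'a::euclidean_space \<Rightarrow> 'b::real_normed_vector"
  assumes S: "open S" "x \<in> S"
    and diff: "\<And>y v. y \<in> S \<Longrightarrow> (\<lambda>h. f (y + h *\<^sub>R v)) differentiable (at 0)"
    and cont: "\<And>b. b \<in> Basis \<Longrightarrow> continuous_on S (\<lambda>y. dirderiv f y b)"
  shows "(f has_derivative (\<lambda>v. \<Sum>b\<in>Basis. (v \<bullet> b) *\<^sub>R dirderiv f x b)) (at x)"
  unfolding has_derivative_at_alt
proof (intro conjI allI impI)
  show "bounded_linear (\<lambda>v. \<Sum>b\<in>Basis. (v \<bullet> b) *\<^sub>R dirderiv f x b)"
    by (intro bounded_linear_sum bounded_linear_scaleR_left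
        bounded_linear_compose[OF bounded_linear_scaleR_left] bounded_linear_inner_left)
  fix e :: real assume e: "e > 0"
  let ?m = "DIM('a)"
  obtain \<beta> where \<beta>: "bij_betw \<beta> {..<?m} (Basis :: 'a set)"
    using ex_bij_betw_nat_finite[of "Basis :: 'a set"] unfolding atLeast0LessThan by auto
  have "\<forall>\<^sub>F y in nhds x. y \<in> S \<and> (\<forall>b\<in>Basis. dist (dirderiv f y b) (dirderiv f x b) < e / ?m)"
  proof -
    have "\<forall>b\<in>Basis. \<forall>\<^sub>F y in nhds x. y \<in> S \<and> dist (dirderiv f y b) (dirderiv f x b) < e / ?m"
      using continuous_on_eventually_near[OF cont S] e by simp
    then have "\<forall>\<^sub>F y in nhds x. \<forall>b\<in>Basis. y \<in> S \<and> dist (dirderiv f y b) (dirderiv f x b) < e / ?m"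
      by (simp add: eventually_ball_finite)
    with eventually_nhds_in_open[OF S] show ?thesis by eventually_elim blast
  qed
  then obtain d where d: "d > 0"
    "\<And>y. dist y x < d \<Longrightarrow> y \<in> S \<and> (\<forall>b\<in>Basis. dist (dirderiv f y b) (dirderiv f x b) < e / ?m)"
    unfolding eventually_nhds_metric by blast
  show "\<exists>d>0. \<forall>y. norm (y - x) < d \<longrightarrow>
      norm (f y - f x - (\<Sum>b\<in>Basis. ((y - x) \<bullet> b) *\<^sub>R dirderiv f x b)) \<le> e * norm (y - x)"
  proof (intro exI[of _ "d / ?m"] conjI allI impI)
    show "d / ?m > 0" using d by simp
    fix y assume "norm (y - x) < d / ?m"
    define v where "v = y - x"
    have vm: "?m * norm v < d" using \<open>norm (y - x) < d / ?m\<close> by (simp add: v_def field_simps)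
    define p where "p = coord_path \<beta> x v"
    have step: "norm (f (p (Suc k)) - f (p k) - (v \<bullet> \<beta> k) *\<^sub>R dirderiv f x (\<beta> k))
        \<le> e / ?m * \<bar>v \<bullet> \<beta> k\<bar>" if k: "k < ?m" for k
      unfolding p_def coord_path_Suc
    proof (rule dirderiv_increment_bound)
      fix \<sigma> assume "\<sigma> \<in> closed_segment 0 (v \<bullet> \<beta> k)"
      then have "\<bar>\<sigma>\<bar> \<le> \<bar>v \<bullet> \<beta> k\<bar>" by (auto simp: closed_segment_eq_real_ivl split: if_splits)
      from norm_coord_path_le[OF \<beta> k this, of x] vm
      have near: "coord_path \<beta> x v k + \<sigma> *\<^sub>R \<beta> k \<in> S \<and>
          (\<forall>b\<in>Basis. dist (dirderiv f (coord_path \<beta> x v k + \<sigma> *\<^sub>R \<beta> k) b) (dirderiv f x b) < e / ?m)"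
        by (intro d(2)) (simp add: dist_norm)
      then show "(\<lambda>h. f ((coord_path \<beta> x v k + \<sigma> *\<^sub>R \<beta> k) + h *\<^sub>R \<beta> k)) differentiable at 0"
        using diff by blast
      show "norm (dirderiv f (coord_path \<beta> x v k + \<sigma> *\<^sub>R \<beta> k) (\<beta> k) - dirderiv f x (\<beta> k)) \<le> e / ?m"
        using near bij_betw_apply[OF \<beta>] k by (force simp: dist_norm)
    qed
    have "f y - f x = (\<Sum>k<?m. f (p (Suc k)) - f (p k))"
      using sum_lessThan_telescope[of "\<lambda>k. f (p k)" ?m] coord_path_DIM[OF \<beta>, of x v]
      by (simp add: p_def v_def coord_path_def)
    moreover have "(\<Sum>b\<in>Basis. ((y - x) \<bullet> b) *\<^sub>R dirderiv f x b) = (\<Sum>k<?m. (v \<bullet> \<beta> k) *\<^sub>R dirderiv f x (\<beta> k))"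
      using sum.reindex_bij_betw[OF \<beta>, of "\<lambda>b. (v \<bullet> b) *\<^sub>R dirderiv f x b"] by (simp add: v_def)
    ultimately have "norm (f y - f x - (\<Sum>b\<in>Basis. ((y - x) \<bullet> b) *\<^sub>R dirderiv f x b))
        = norm (\<Sum>k<?m. f (p (Suc k)) - f (p k) - (v \<bullet> \<beta> k) *\<^sub>R dirderiv f x (\<beta> k))"
      by (simp add: sum_subtractf)
    also have "\<dots> \<le> (\<Sum>k<?m. e / ?m * \<bar>v \<bullet> \<beta> k\<bar>)"
      by (rule order.trans[OF norm_sum sum_mono]) (rule step, simp)
    also have "\<dots> = e / ?m * (\<Sum>k<?m. \<bar>v \<bullet> \<beta> k\<bar>)" by (simp add: sum_distrib_left)
    also have "\<dots> \<le> e / ?m * (?m * norm v)"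
      using sum_abs_inner_Basis_le[OF \<beta>] e by (intro mult_left_mono) auto
    also have "\<dots> = e * norm (y - x)" by (simp add: v_def)
    finally show "norm (f y - f x - (\<Sum>b\<in>Basis. ((y - x) \<bullet> b) *\<^sub>R dirderiv f x b)) \<le> e * norm (y - x)" .
  qed
qed

lemma smooth_on_has_derivative:
  fixes f :: "'a::euclidean_space \<Rightarrow> 'b::real_normed_vector"
  assumes f: "smooth_on S f" and x: "x \<in> S"
  shows "(f has_derivative (\<lambda>v. dirderiv f x v)) (at x)"
proof -
  define f' where "f' = (\<lambda>v. \<Sum>b\<in>Basis. (v \<bullet> b) *\<^sub>R dirderiv f x b)"
  have D: "(f has_derivative f') (at x)"
    unfolding f'_def
    using smooth_on_imp_open[OF f] x smooth_on_differentiable_line[OF f]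
      smooth_on_imp_continuous_on[OF smooth_on_dirderiv[OF f]]
    by (intro has_derivative_of_continuous_dirderiv) auto
  have "dirderiv f x v = f' v" for v
  proof -
    have line: "((\<lambda>h::real. x + h *\<^sub>R v) has_derivative (\<lambda>h. h *\<^sub>R v)) (at 0)"
      by (auto intro!: derivative_eq_intros)
    have "((\<lambda>h. f (x + h *\<^sub>R v)) has_derivative (\<lambda>h. f' (h *\<^sub>R v))) (at 0)"
      using has_derivative_compose[OF line, of f f'] D by (simp add: o_def)
    then have "((\<lambda>h. f (x + h *\<^sub>R v)) has_vector_derivative f' v) (at 0)"
      using has_derivative_bounded_linear[OF D]
      by (simp add: has_vector_derivative_def linear_simps bounded_linear.linear)
    then show ?thesis
      using smooth_on_has_vector_derivative_dirderiv[OF f x] vector_derivative_unique_at by blast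
  qed
  then have "(\<lambda>v. dirderiv f x v) = f'" by auto
  with D show ?thesis by simp
qed

lemma smooth_on_linear_dirderiv:
  "smooth_on S f \<Longrightarrow> x \<in> S \<Longrightarrow> linear (\<lambda>v. dirderiv f x v)"
  using smooth_on_has_derivative has_derivative_linear by blast

lemma smooth_on_has_vector_derivative_comp:
  fixes f :: "'a::euclidean_space \<Rightarrow> 'b::real_normed_vector"
  assumes f: "smooth_on S f" and \<phi>: "(\<phi> has_vector_derivative w) (at \<tau>)" and inS: "\<phi> \<tau> \<in> S"
  shows "((\<lambda>\<sigma>. f (\<phi> \<sigma>)) has_vector_derivative dirderiv f (\<phi> \<tau>) w) (at \<tau>)"
proof -
  have "((\<lambda>\<sigma>. f (\<phi> \<sigma>)) has_derivative (\<lambda>h. dirderiv f (\<phi> \<tau>) (h *\<^sub>R w))) (at \<tau>)"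
    using has_derivative_compose[OF \<phi>[unfolded has_vector_derivative_def] smooth_on_has_derivative[OF f inS]]
    by (simp add: o_def)
  then show ?thesis
    unfolding has_vector_derivative_def by (simp add: linear_scale[OF smooth_on_linear_dirderiv[OF f inS]])
qed
subsection \<open>Symmetry of second directional derivatives\<close>

lemma mvt_along_line:
  fixes f :: "'a::euclidean_space \<Rightarrow> real"
  assumes f: "smooth_on S f" and h: "h > 0"
    and inS: "\<And>\<sigma>. 0 \<le> \<sigma> \<Longrightarrow> \<sigma> \<le> h \<Longrightarrow> p + \<sigma> *\<^sub>R b \<in> S"
  shows "\<exists>\<sigma>. 0 < \<sigma> \<and> \<sigma> < h \<and> f (p + h *\<^sub>R b) - f p = h * dirderiv f (p + \<sigma> *\<^sub>R b) b"
proof -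
  have D: "((\<lambda>\<sigma>. f (p + \<sigma> *\<^sub>R b)) has_real_derivative dirderiv f (p + \<sigma> *\<^sub>R b) b) (at \<sigma>)"
    if "0 \<le> \<sigma>" "\<sigma> \<le> h" for \<sigma>
    unfolding has_real_derivative_iff_has_vector_derivative
    by (rule has_vector_derivative_dirderiv_along_line)
       (use smooth_on_differentiable_line[OF f inS[OF that]] in auto)
  have "continuous_on {0..h} (\<lambda>\<sigma>. f (p + \<sigma> *\<^sub>R b))"
    using D by (intro continuous_at_imp_continuous_on ballI DERIV_isCont) auto
  moreover have "\<And>x. 0 < x \<Longrightarrow> x < h \<Longrightarrow> (\<lambda>\<sigma>. f (p + \<sigma> *\<^sub>R b)) differentiable (at x)"
    using D real_differentiable_def by (meson less_eq_real_def)
  ultimately obtain l z where "0 < z" "z < h" "DERIV (\<lambda>\<sigma>. f (p + \<sigma> *\<^sub>R b)) z :> l"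
    "f (p + h *\<^sub>R b) - f (p + 0 *\<^sub>R b) = (h - 0) * l"
    using MVT[OF h] by blast
  moreover have "l = dirderiv f (p + z *\<^sub>R b) b"
    using D[of z] calculation DERIV_unique by (meson less_eq_real_def)
  ultimately show ?thesis by auto
qed

lemma second_difference_mvt:
  fixes f :: "'a::euclidean_space \<Rightarrow> real"
  assumes f: "smooth_on S f" and h: "h > 0"
    and inS: "\<And>\<sigma> \<tau>. 0 \<le> \<sigma> \<Longrightarrow> \<sigma> \<le> h \<Longrightarrow> 0 \<le> \<tau> \<Longrightarrow> \<tau> \<le> h \<Longrightarrow> x + \<sigma> *\<^sub>R v + \<tau> *\<^sub>R w \<in> S"
  shows "\<exists>\<sigma> \<tau>. 0 < \<sigma> \<and> \<sigma> < h \<and> 0 < \<tau> \<and> \<tau> < h \<and>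
    f (x + h *\<^sub>R v + h *\<^sub>R w) - f (x + h *\<^sub>R v) - f (x + h *\<^sub>R w) + f x
      = h * h * dirderiv (\<lambda>q. dirderiv f q v) (x + \<sigma> *\<^sub>R v + \<tau> *\<^sub>R w) w"
proof -
  define \<phi> where "\<phi> \<sigma> = f ((x + h *\<^sub>R w) + \<sigma> *\<^sub>R v) - f (x + \<sigma> *\<^sub>R v)" for \<sigma>
  have D: "(\<phi> has_real_derivative dirderiv f ((x + h *\<^sub>R w) + \<sigma> *\<^sub>R v) v - dirderiv f (x + \<sigma> *\<^sub>R v) v) (at \<sigma>)"
    if "0 \<le> \<sigma>" "\<sigma> \<le> h" for \<sigma>
  proof -
    have "(x + h *\<^sub>R w) + \<sigma> *\<^sub>R v \<in> S" "x + \<sigma> *\<^sub>R v \<in> S"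
      using inS[OF that, of h] inS[OF that, of 0] h by (simp_all add: algebra_simps)
    then show ?thesis unfolding \<phi>_def has_real_derivative_iff_has_vector_derivative
      by (intro has_vector_derivative_diff has_vector_derivative_dirderiv_along_line
          smooth_on_differentiable_line[OF f]) auto
  qed
  have "continuous_on {0..h} \<phi>"
    using D by (intro continuous_at_imp_continuous_on ballI DERIV_isCont) auto
  moreover have "\<And>s. 0 < s \<Longrightarrow> s < h \<Longrightarrow> \<phi> differentiable (at s)"
    using D real_differentiable_def by (meson less_eq_real_def)
  ultimately obtain l \<sigma> where \<sigma>: "0 < \<sigma>" "\<sigma> < h" "DERIV \<phi> \<sigma> :> l" "\<phi> h - \<phi> 0 = (h - 0) * l"
    using MVT[OF h] by blast
  have l: "l = dirderiv f ((x + \<sigma> *\<^sub>R v) + h *\<^sub>R w) v - dirderiv f (x + \<sigma> *\<^sub>R v) v"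
    using D[of \<sigma>] \<sigma> DERIV_unique by (fastforce simp: algebra_simps)
  obtain \<tau> where \<tau>: "0 < \<tau>" "\<tau> < h" "dirderiv f ((x + \<sigma> *\<^sub>R v) + h *\<^sub>R w) v - dirderiv f (x + \<sigma> *\<^sub>R v) v
      = h * dirderiv (\<lambda>q. dirderiv f q v) ((x + \<sigma> *\<^sub>R v) + \<tau> *\<^sub>R w) w"
    using mvt_along_line[OF smooth_on_dirderiv[OF f] h, of "x + \<sigma> *\<^sub>R v" w v] inS \<sigma> by auto
  have "f (x + h *\<^sub>R v + h *\<^sub>R w) - f (x + h *\<^sub>R v) - f (x + h *\<^sub>R w) + f x = \<phi> h - \<phi> 0"
    unfolding \<phi>_def by (simp add: algebra_simps)
  also have "\<dots> = h * h * dirderiv (\<lambda>q. dirderiv f q v) ((x + \<sigma> *\<^sub>R v) + \<tau> *\<^sub>R w) w"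
    using \<sigma>(4) l \<tau>(3) by simp
  finally show ?thesis using \<sigma> \<tau> by (intro exI[of _ \<sigma>] exI[of _ \<tau>]) (simp add: algebra_simps)
qed

lemma norm_scaleR_add_le:
  fixes v w :: "'a::real_normed_vector"
  assumes "0 \<le> \<sigma>" "\<sigma> \<le> h" "0 \<le> \<tau>" "\<tau> \<le> h"
  shows "norm (\<sigma> *\<^sub>R v + \<tau> *\<^sub>R w) \<le> h * (norm v + norm w)"
proof -
  have "norm (\<sigma> *\<^sub>R v + \<tau> *\<^sub>R w) \<le> \<sigma> * norm v + \<tau> * norm w"
    using assms norm_triangle_ineq[of "\<sigma> *\<^sub>R v" "\<tau> *\<^sub>R w"] by simp
  also have "\<dots> \<le> h * norm v + h * norm w"
    using assms by (intro add_mono mult_right_mono) auto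
  finally show ?thesis by (simp add: distrib_left)
qed

lemma dirderiv_commute_real:
  fixes f :: "'a::euclidean_space \<Rightarrow> real"
  assumes f: "smooth_on S f" and x: "x \<in> S"
  shows "dirderiv (\<lambda>q. dirderiv f q v) x w = dirderiv (\<lambda>q. dirderiv f q w) x v"
proof (rule ccontr)
  define A where "A = (\<lambda>q. dirderiv (\<lambda>q. dirderiv f q v) q w)"
  define B where "B = (\<lambda>q. dirderiv (\<lambda>q. dirderiv f q w) q v)"
  assume "\<not> ?thesis"
  then have e: "\<bar>A x - B x\<bar> / 2 > 0" unfolding A_def B_def by simp
  have S: "open S" using smooth_on_imp_open[OF f] .
  have "\<forall>\<^sub>F y in nhds x. y \<in> S \<and> dist (A y) (A x) < \<bar>A x - B x\<bar> / 2 \<and> dist (B y) (B x) < \<bar>A x - B x\<bar> / 2"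
    using continuous_on_eventually_near[OF _ S x e, of A] continuous_on_eventually_near[OF _ S x e, of B]
      smooth_on_imp_continuous_on[OF smooth_on_dirderiv[OF smooth_on_dirderiv[OF f]]]
    unfolding A_def B_def by (auto elim: eventually_elim2)
  then obtain r where r: "r > 0" "\<And>y. dist y x < r \<Longrightarrow>
      y \<in> S \<and> dist (A y) (A x) < \<bar>A x - B x\<bar> / 2 \<and> dist (B y) (B x) < \<bar>A x - B x\<bar> / 2"
    unfolding eventually_nhds_metric by blast
  define h where "h = r / (2 * (norm v + norm w + 1))"
  have nvw: "norm v + norm w + 1 > 0" by (simp add: add_nonneg_pos)
  have h: "h > 0" "h * (norm v + norm w) < r"
  proof -
    show "h > 0" using r(1) nvw by (simp add: h_def)
    have "h * (norm v + norm w) < h * (norm v + norm w + 1)" using \<open>h > 0\<close> by simp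
    also have "\<dots> = r / 2" using nvw by (simp add: h_def field_simps)
    finally show "h * (norm v + norm w) < r" using r(1) by simp
  qed
  have near: "dist (x + \<sigma> *\<^sub>R a + \<tau> *\<^sub>R c) x < r"
    if "0 \<le> \<sigma>" "\<sigma> \<le> h" "0 \<le> \<tau>" "\<tau> \<le> h" "norm a + norm c = norm v + norm w" for \<sigma> \<tau> a c
    using norm_scaleR_add_le[OF that(1-4), of a c] that(5) h(2) by (simp add: dist_norm add.assoc)
  obtain \<sigma>1 \<tau>1 where 1: "0 < \<sigma>1" "\<sigma>1 < h" "0 < \<tau>1" "\<tau>1 < h"
    "f (x + h *\<^sub>R v + h *\<^sub>R w) - f (x + h *\<^sub>R v) - f (x + h *\<^sub>R w) + f x = h * h * A (x + \<sigma>1 *\<^sub>R v + \<tau>1 *\<^sub>R w)"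
    using second_difference_mvt[OF f h(1), of x v w] near r(2) unfolding A_def by fastforce
  obtain \<sigma>2 \<tau>2 where 2: "0 < \<sigma>2" "\<sigma>2 < h" "0 < \<tau>2" "\<tau>2 < h"
    "f (x + h *\<^sub>R w + h *\<^sub>R v) - f (x + h *\<^sub>R w) - f (x + h *\<^sub>R v) + f x = h * h * B (x + \<sigma>2 *\<^sub>R w + \<tau>2 *\<^sub>R v)"
    using second_difference_mvt[OF f h(1), of x w v] near r(2) unfolding B_def by (fastforce simp: add.commute)
  have "A (x + \<sigma>1 *\<^sub>R v + \<tau>1 *\<^sub>R w) = B (x + \<sigma>2 *\<^sub>R w + \<tau>2 *\<^sub>R v)"
    using 1(5) 2(5) h(1) by (simp add: algebra_simps)
  moreover have "dist (A (x + \<sigma>1 *\<^sub>R v + \<tau>1 *\<^sub>R w)) (A x) < \<bar>A x - B x\<bar> / 2"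
    using r(2) near[of \<sigma>1 \<tau>1 v w] 1 by auto
  moreover have "dist (B (x + \<sigma>2 *\<^sub>R w + \<tau>2 *\<^sub>R v)) (B x) < \<bar>A x - B x\<bar> / 2"
    using r(2) near[of \<sigma>2 \<tau>2 w v] 2 by (auto simp: add.commute)
  ultimately show False unfolding dist_real_def by (simp add: abs_if split: if_splits)
qed

definition dd_regular_on :: "'a::euclidean_space set \<Rightarrow> ('a \<Rightarrow> 'b::real_normed_vector) \<Rightarrow> bool" where
  "dd_regular_on S h \<longleftrightarrow> continuous_on S h \<and> (\<forall>x\<in>S. \<forall>v. (\<lambda>t. h (x + t *\<^sub>R v)) differentiable (at 0))"

definition smooth_upto_on :: "'a::euclidean_space set \<Rightarrow> nat \<Rightarrow> ('a \<Rightarrow> 'b::real_normed_vector) \<Rightarrow> bool" where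
  "smooth_upto_on S k f \<longleftrightarrow> (\<forall>vs. length vs \<le> k \<longrightarrow> dd_regular_on S (iter_dd f vs))"

lemma smooth_on_iff_smooth_upto_on: "smooth_on S f \<longleftrightarrow> open S \<and> (\<forall>k. smooth_upto_on S k f)"
  unfolding smooth_on_def smooth_upto_on_def dd_regular_on_def by blast

lemma dd_regular_on_cong_open:
  assumes "dd_regular_on S h" "open S" "\<And>x. x \<in> S \<Longrightarrow> h x = h' x"
  shows "dd_regular_on S h'"
  unfolding dd_regular_on_def
proof (intro conjI ballI allI)
  show "continuous_on S h'" using assms continuous_on_cong unfolding dd_regular_on_def by metis
  fix x v assume x: "x \<in> S"
  have ev: "eventually (\<lambda>t. h (x + t *\<^sub>R v) = h' (x + t *\<^sub>R v)) (nhds 0)"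
    using eventually_line_in_open[OF assms(2) x] by eventually_elim (use assms(3) in auto)
  obtain D where D: "((\<lambda>t. h (x + t *\<^sub>R v)) has_vector_derivative D) (at 0)"
    using assms(1) x unfolding dd_regular_on_def by (meson vector_derivative_works)
  have "((\<lambda>t. h' (x + t *\<^sub>R v)) has_vector_derivative D) (at 0)"
    using has_vector_derivative_cong_ev[where S=UNIV and x=0 and f="\<lambda>t. h (x + t *\<^sub>R v)"
        and g="\<lambda>t. h' (x + t *\<^sub>R v)"] ev D assms(3) x
    by (auto simp: eventually_mono[OF ev])
  then show "(\<lambda>t. h' (x + t *\<^sub>R v)) differentiable at 0" using differentiableI_vector by blast
qed

lemma iter_dd_add:
  assumes S: "open S" and a: "smooth_upto_on S k a" and b: "smooth_upto_on S k b"
    and "length vs \<le> k" "x \<in> S"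
  shows "iter_dd (\<lambda>x. a x + b x) vs x = iter_dd a vs x + iter_dd b vs x"
  using assms(4,5)
proof (induction vs arbitrary: x)
  case Nil then show ?case by simp
next
  case (Cons v vs)
  have ga: "dd_regular_on S (iter_dd a vs)" and gb: "dd_regular_on S (iter_dd b vs)"
    using a b Cons.prems unfolding smooth_upto_on_def by auto
  have ev: "eventually (\<lambda>t. iter_dd (\<lambda>x. a x + b x) vs (x + t *\<^sub>R v)
      = iter_dd a vs (x + t *\<^sub>R v) + iter_dd b vs (x + t *\<^sub>R v)) (nhds 0)"
    using eventually_line_in_open[OF S Cons.prems(2)] by eventually_elim (use Cons in auto)
  have "((\<lambda>t. iter_dd a vs (x + t *\<^sub>R v) + iter_dd b vs (x + t *\<^sub>R v)) has_vector_derivative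
      dirderiv (iter_dd a vs) x v + dirderiv (iter_dd b vs) x v) (at 0)"
    using ga gb Cons.prems unfolding dd_regular_on_def
    by (intro has_vector_derivative_add has_vector_derivative_dirderiv) auto
  then have "((\<lambda>t. iter_dd (\<lambda>x. a x + b x) vs (x + t *\<^sub>R v)) has_vector_derivative
      dirderiv (iter_dd a vs) x v + dirderiv (iter_dd b vs) x v) (at 0)"
    using has_vector_derivative_cong_ev[where S=UNIV and x=0 and g="\<lambda>t. iter_dd (\<lambda>x. a x + b x) vs (x + t *\<^sub>R v)"
        and f="\<lambda>t. iter_dd a vs (x + t *\<^sub>R v) + iter_dd b vs (x + t *\<^sub>R v)"] ev Cons
    by (auto simp: eventually_mono[OF ev])
  then show ?case unfolding iter_dd.simps dirderiv_def[of "iter_dd (\<lambda>x. a x + b x) vs"]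
    by (simp add: vector_derivative_at dirderiv_def)
qed

lemma smooth_upto_on_add:
  assumes S: "open S" and a: "smooth_upto_on S k a" and b: "smooth_upto_on S k b"
  shows "smooth_upto_on S k (\<lambda>x. a x + b x)"
  unfolding smooth_upto_on_def
proof (intro allI impI)
  fix vs :: "'a list" assume l: "length vs \<le> k"
  have "dd_regular_on S (\<lambda>x. iter_dd a vs x + iter_dd b vs x)"
    using a b l unfolding smooth_upto_on_def dd_regular_on_def
    by (auto intro!: continuous_on_add differentiable_add)
  then show "dd_regular_on S (iter_dd (\<lambda>x. a x + b x) vs)"
    by (rule dd_regular_on_cong_open[OF _ S]) (use iter_dd_add[OF S a b l] in auto)
qed

lemma has_vector_derivative_line_mult:
  fixes f g :: "'a::euclidean_space \<Rightarrow> real"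
  assumes "smooth_on S f" "smooth_on S g" "x \<in> S"
  shows "((\<lambda>t. f (x + t *\<^sub>R v) * g (x + t *\<^sub>R v)) has_vector_derivative
     dirderiv f x v * g x + f x * dirderiv g x v) (at 0)"
  using DERIV_mult[OF smooth_on_has_real_derivative_dirderiv[OF assms(1,3)]
      smooth_on_has_real_derivative_dirderiv[OF assms(2,3)], of v v]
  by (simp add: has_real_derivative_iff_has_vector_derivative mult.commute)

lemma smooth_upto_on_mult:
  fixes f g :: "'a::euclidean_space \<Rightarrow> real"
  shows "smooth_on S f \<Longrightarrow> smooth_on S g \<Longrightarrow> smooth_upto_on S k (\<lambda>x. f x * g x)"
proof (induction k arbitrary: f g)
  case 0
  then show ?case unfolding smooth_upto_on_def dd_regular_on_def
    using has_vector_derivative_line_mult[OF 0] smooth_on_imp_continuous_on[OF 0(1)]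
      smooth_on_imp_continuous_on[OF 0(2)]
    by (auto intro!: continuous_on_mult differentiableI_vector)
next
  case (Suc k)
  have S: "open S" using Suc smooth_on_imp_open by blast
  show ?case unfolding smooth_upto_on_def
  proof (intro allI impI)
    fix vs :: "'a list" assume l: "length vs \<le> Suc k"
    show "dd_regular_on S (iter_dd (\<lambda>x. f x * g x) vs)"
    proof (cases "length vs \<le> k")
      case True
      then show ?thesis using Suc.IH[OF Suc.prems] unfolding smooth_upto_on_def by blast
    next
      case False
      then obtain ws v where vs: "vs = ws @ [v]" and lws: "length ws = k"
        using l by (metis le_SucE length_Suc_conv_rev)
      \<comment> \<open>product rule for the innermost derivative, then induction on the rest\<close>
      define p where "p = (\<lambda>x. dirderiv f x v * g x)"
      define q where "q = (\<lambda>x. f x * dirderiv g x v)"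
      have "smooth_upto_on S k p" "smooth_upto_on S k q" unfolding p_def q_def
        by (intro Suc.IH Suc.prems smooth_on_dirderiv)+
      then have reg: "dd_regular_on S (iter_dd (\<lambda>x. p x + q x) ws)"
        using smooth_upto_on_add[OF S] lws unfolding smooth_upto_on_def by blast
      have "p x + q x = iter_dd (\<lambda>x. f x * g x) [v] x" if "x \<in> S" for x
        using has_vector_derivative_line_mult[OF Suc.prems that, of v] unfolding p_def q_def
        by (simp add: dirderiv_def vector_derivative_at)
      then have "iter_dd (\<lambda>x. p x + q x) ws x = iter_dd (\<lambda>x. f x * g x) vs x" if "x \<in> S" for x
        unfolding vs iter_dd_append[symmetric] by (rule iter_dd_cong_open[OF S _ that])
      then show ?thesis by (rule dd_regular_on_cong_open[OF reg S])
    qed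
  qed
qed

lemma smooth_on_mult:
  fixes f g :: "'a::euclidean_space \<Rightarrow> real"
  assumes "smooth_on S f" "smooth_on S g"
  shows "smooth_on S (\<lambda>x. f x * g x)"
  using smooth_upto_on_mult[OF assms] smooth_on_imp_open[OF assms(1)] smooth_on_iff_smooth_upto_on by blast

lemma has_vector_derivative_vec_nth:
  "(\<phi> has_vector_derivative D) (at t) \<Longrightarrow> ((\<lambda>s. \<phi> s $ i) has_vector_derivative D $ i) (at t)"
  unfolding has_vector_derivative_def
  using bounded_linear.has_derivative[OF bounded_linear_vec_nth, of \<phi> "\<lambda>s. s *\<^sub>R D" "at t" i]
  by simp

lemma iter_dd_component:
  fixes f :: "'a::euclidean_space \<Rightarrow> real^'m"
  assumes f: "smooth_on S f" and "x \<in> S"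
  shows "iter_dd (\<lambda>x. f x $ i) vs x = iter_dd f vs x $ i"
  using assms(2)
proof (induction vs arbitrary: x)
  case Nil then show ?case by simp
next
  case (Cons v vs)
  have ev: "eventually (\<lambda>t. iter_dd (\<lambda>x. f x $ i) vs (x + t *\<^sub>R v) = iter_dd f vs (x + t *\<^sub>R v) $ i) (nhds 0)"
    using eventually_line_in_open[OF smooth_on_imp_open[OF f] Cons.prems] by eventually_elim (use Cons in auto)
  have "((\<lambda>t. iter_dd f vs (x + t *\<^sub>R v) $ i) has_vector_derivative dirderiv (iter_dd f vs) x v $ i) (at 0)"
    by (intro has_vector_derivative_vec_nth smooth_on_has_vector_derivative_dirderiv[OF smooth_on_iter_dd[OF f] Cons.prems])
  then have "((\<lambda>t. iter_dd (\<lambda>x. f x $ i) vs (x + t *\<^sub>R v)) has_vector_derivative dirderiv (iter_dd f vs) x v $ i) (at 0)"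
    using has_vector_derivative_cong_ev[where S=UNIV and x=0 and g="\<lambda>t. iter_dd (\<lambda>x. f x $ i) vs (x + t *\<^sub>R v)"
          and f="\<lambda>t. iter_dd f vs (x + t *\<^sub>R v) $ i"] ev Cons
    by (auto simp: eventually_mono[OF ev])
  then show ?case unfolding iter_dd.simps dirderiv_def[of "iter_dd (\<lambda>x. f x $ i) vs"]
    by (simp add: vector_derivative_at dirderiv_def)
qed

lemma smooth_on_component:
  fixes f :: "'a::euclidean_space \<Rightarrow> real^'m"
  assumes f: "smooth_on S f"
  shows "smooth_on S (\<lambda>x. f x $ i)"
proof -
  have S: "open S" using f smooth_on_imp_open by blast
  have "dd_regular_on S (\<lambda>x. iter_dd f vs x $ i)" for vs
    unfolding dd_regular_on_def
    using smooth_on_imp_continuous_on[OF smooth_on_iter_dd[OF f]]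
      has_vector_derivative_vec_nth[OF smooth_on_has_vector_derivative_dirderiv[OF smooth_on_iter_dd[OF f]]]
    by (auto intro!: continuous_intros differentiableI_vector)
  then have "dd_regular_on S (iter_dd (\<lambda>x. f x $ i) vs)" for vs
    by (rule dd_regular_on_cong_open[OF _ S]) (use iter_dd_component[OF f] in auto)
  then show ?thesis using S smooth_on_iff_smooth_upto_on smooth_upto_on_def by blast
qed

lemma dirderiv_commute:
  fixes f :: "'a::euclidean_space \<Rightarrow> real^'m"
  assumes f: "smooth_on S f" and x: "x \<in> S"
  shows "dirderiv (\<lambda>q. dirderiv f q v) x w = dirderiv (\<lambda>q. dirderiv f q w) x v"
proof -
  have "iter_dd f [w, v] x $ i = iter_dd f [v, w] x $ i" for i
    using iter_dd_component[OF f x, of i "[w,v]"] iter_dd_component[OF f x, of i "[v,w]"]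
      dirderiv_commute_real[OF smooth_on_component[OF f] x, of i v w] by simp
  then show ?thesis by (simp add: vec_eq_iff)
qed

lemma DERIV_dirderiv_comp:
  fixes f :: "'a::euclidean_space \<Rightarrow> real"
  assumes f: "smooth_on S f" and p: "p \<in> S" and \<phi>: "DERIV \<phi> \<tau>0 :> \<phi>'" and z: "\<phi> \<tau>0 = 0"
  shows "DERIV (\<lambda>\<tau>. f (p + \<phi> \<tau> *\<^sub>R v)) \<tau>0 :> dirderiv f p v * \<phi>'"
  using DERIV_chain2[OF _ \<phi>] smooth_on_has_real_derivative_dirderiv[OF f p, of v] z by simp

lemma deriv_eq_dirderiv:
  fixes f :: "'a::euclidean_space \<Rightarrow> real"
  assumes f: "smooth_on S f" and p: "p \<in> S"
    and ev: "eventually (\<lambda>\<tau>. \<phi> \<tau> = f (p + (\<tau> - t) *\<^sub>R v)) (nhds t)"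
  shows "deriv \<phi> t = dirderiv f p v"
proof -
  have "DERIV (\<lambda>\<tau>. f (p + (\<tau> - t) *\<^sub>R v)) t :> dirderiv f p v * 1"
    by (rule DERIV_dirderiv_comp[OF f p]) (auto intro!: derivative_eq_intros)
  then have "DERIV \<phi> t :> dirderiv f p v"
    using DERIV_cong_ev[OF refl ev refl] by simp
  then show ?thesis by (rule DERIV_imp_deriv)
qed

lemma dirderiv_homogeneous:
  fixes f :: "'a::euclidean_space \<Rightarrow> real"
  assumes f: "smooth_on S f" and p: "p \<in> S"
    and ev: "eventually (\<lambda>k. f (p + (k - 1) *\<^sub>R v) = k ^ m * f p) (nhds 1)"
  shows "dirderiv f p v = real m * f p"
proof -
  have "DERIV (\<lambda>k. f (p + (k - 1) *\<^sub>R v)) 1 :> dirderiv f p v * 1"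
    by (rule DERIV_dirderiv_comp[OF f p]) (auto intro!: derivative_eq_intros)
  then have "DERIV (\<lambda>k. k ^ m * f p) 1 :> dirderiv f p v"
    using DERIV_cong_ev[OF refl ev refl] by simp
  moreover have "DERIV (\<lambda>k::real. k ^ m * f p) 1 :> real m * f p"
    by (auto intro!: derivative_eq_intros)
  ultimately show ?thesis by (rule DERIV_unique)
qed

lemma eventually_nonzero_line:
  "y \<noteq> (0::'a::real_normed_vector) \<Longrightarrow> eventually (\<lambda>h::real. y + h *\<^sub>R v \<noteq> 0) (nhds 0)"
  using eventually_line_in_open[of "UNIV - {0}" y v] by (simp add: open_Diff)

lemma linear_triple_expansion:
  fixes l :: "real \<times> (real^'n) \<times> (real^'n) \<Rightarrow> real"
  assumes "linear l"
  shows "l (a, b, c) = a * l (1, 0, 0) + (\<Sum>k\<in>UNIV. b $ k * l (0, axis k 1, 0))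
      + (\<Sum>k\<in>UNIV. c $ k * l (0, 0, axis k 1))"
proof -
  have "(\<Sum>i\<in>UNIV. (b $ i) *\<^sub>R axis i (1::real)) = b" "(\<Sum>i\<in>UNIV. (c $ i) *\<^sub>R axis i (1::real)) = c"
    using basis_expansion[of b] basis_expansion[of c] by (simp_all add: scalar_mult_eq_scaleR)
  then have e: "(a, b, c) = a *\<^sub>R (1, 0, 0) + (\<Sum>k\<in>UNIV. (b $ k) *\<^sub>R (0, axis k 1, 0))
      + (\<Sum>k\<in>UNIV. (c $ k) *\<^sub>R (0, 0, axis k 1))"
    by (simp add: prod_eq_iff fst_sum snd_sum)
  show ?thesis
    by (subst e, simp only: linear_add[OF assms] linear_sum[OF assms] linear_scale[OF assms]) simp
qed

lemma sum_mult_inverse_contract: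
  fixes gm gi :: "real^'n^'n"
  assumes "\<And>j l. (\<Sum>i\<in>UNIV. gm $ i $ j * gi $ i $ l) = (if j = l then 1 else 0)"
  shows "(\<Sum>i\<in>UNIV. gm $ i $ j * (c * (\<Sum>l\<in>UNIV. gi $ i $ l * R l))) = c * R j"
proof -
  have "(\<Sum>i\<in>UNIV. gm $ i $ j * (c * (\<Sum>l\<in>UNIV. gi $ i $ l * R l)))
      = c * (\<Sum>l\<in>UNIV. (\<Sum>i\<in>UNIV. gm $ i $ j * gi $ i $ l) * R l)"
    unfolding sum_distrib_left sum_distrib_right by (subst sum.swap) (simp add: mult_ac)
  also have "\<dots> = c * R j"
  proof -
    have "\<And>l. (if j = l then 1 else 0) * R l = (if l = j then R l else 0)" by auto
    then show ?thesis by (simp add: assms)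
  qed
  finally show ?thesis .
qed

lemma linear_ode_initial_zero:
  fixes h r :: "real \<Rightarrow> real"
  assumes lt: "t0 < t1" and ch: "continuous_on {t0..t1} h" and cr: "continuous_on {t0..t1} r"
    and h0: "h t0 = 0" and D: "\<And>\<tau>. t0 < \<tau> \<Longrightarrow> \<tau> < t1 \<Longrightarrow> DERIV h \<tau> :> r \<tau> * h \<tau>"
  shows "h t1 = 0"
proof -
  obtain C where C: "\<And>\<tau>. \<tau> \<in> {t0..t1} \<Longrightarrow> \<bar>r \<tau>\<bar> \<le> C"
    using compact_imp_bounded[OF compact_continuous_image[OF cr compact_Icc]]
    unfolding bounded_iff by (metis image_eqI real_norm_def)
  \<comment> \<open>Gr\<ouml>nwall: the weighted energy k is nonincreasing and vanishes at t0\<close>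
  define k where "k \<tau> = (h \<tau>)\<^sup>2 * exp (- (2 * C) * \<tau>)" for \<tau>
  have ck: "continuous_on {t0..t1} k" unfolding k_def by (intro continuous_intros ch)
  have Dk: "DERIV k \<tau> :> 2 * h \<tau> * (r \<tau> * h \<tau>) * exp (- (2 * C) * \<tau>) + (h \<tau>)\<^sup>2 * (exp (- (2 * C) * \<tau>) * (- (2 * C)))"
    if "t0 < \<tau>" "\<tau> < t1" for \<tau>
    unfolding k_def using D[OF that] by (auto intro!: derivative_eq_intros)
  obtain l z where z: "t0 < z" "z < t1" "DERIV k z :> l" "k t1 - k t0 = (t1 - t0) * l"
    using MVT[OF lt ck] Dk real_differentiable_def by blast
  have "l = 2 * (r z - C) * (h z)\<^sup>2 * exp (- (2 * C) * z)"
    using DERIV_unique[OF z(3) Dk[OF z(1,2)]] by (simp add: power2_eq_square algebra_simps)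
  moreover have "r z - C \<le> 0" using C[of z] z by auto
  ultimately have "l \<le> 0" by (simp add: mult_nonpos_nonneg)
  then have "(t1 - t0) * l \<le> 0" using lt by (simp add: mult_nonneg_nonpos)
  then have "k t1 \<le> k t0" using z(4) by linarith
  then have "(h t1)\<^sup>2 * exp (- (2 * C) * t1) \<le> 0" by (simp add: k_def h0)
  then show ?thesis by (simp add: mult_le_0_iff)
qed

section \<open>The fundamental tensor of a time-dependent Finsler metric\<close>

text \<open>Fext is a smooth extension of (t, u, y) \<mapsto> F t u y off the zero section; all derivatives
  of L = F^2 are taken of its square Lsq, as directional derivatives in the space of triples.\<close>

locale finsler_extension =
  fixes F :: "'n::finite tfun" and I :: "real set" and M :: "(real^'n) set"
    and Fext :: "real \<times> (real^'n) \<times> (real^'n) \<Rightarrow> real" and Uext :: "(real \<times> (real^'n) \<times> (real^'n)) set"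
  assumes smooth_Fext: "smooth_on Uext Fext" and domain_subset: "I \<times> M \<times> (UNIV - {0}) \<subseteq> Uext"
    and Fext_eq: "\<And>t u y. t \<in> I \<Longrightarrow> u \<in> M \<Longrightarrow> y \<noteq> 0 \<Longrightarrow> Fext (t, u, y) = F t u y"
    and homogeneous: "\<And>t u y k. t \<in> I \<Longrightarrow> u \<in> M \<Longrightarrow> k > 0 \<Longrightarrow> F t u (k *\<^sub>R y) = k * F t u y"
    and gform_pos: "\<And>t u y V. t \<in> I \<Longrightarrow> u \<in> M \<Longrightarrow> y \<noteq> 0 \<Longrightarrow> V \<noteq> 0 \<Longrightarrow> gform F t u y V V > 0"
    and open_M: "open M"
begin

definition Lsq where "Lsq p = Fext p * Fext p"
definition y_dir :: "'n \<Rightarrow> real \<times> (real^'n) \<times> (real^'n)" where "y_dir j = (0, 0, axis j 1)"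
definition u_dir :: "'n \<Rightarrow> real \<times> (real^'n) \<times> (real^'n)" where "u_dir j = (0, axis j 1, 0)"
definition t_dir :: "real \<times> (real^'n) \<times> (real^'n)" where "t_dir = (1, 0, 0)"
definition dL where "dL w p = dirderiv Lsq p w"
definition ddL where "ddL w v p = dirderiv (\<lambda>q. dL v q) p w"

lemma smooth_Lsq: "smooth_on Uext Lsq"
  unfolding Lsq_def by (intro smooth_on_mult smooth_Fext)

lemma smooth_dL: "smooth_on Uext (dL v)"
  unfolding dL_def by (intro smooth_on_dirderiv smooth_Lsq)

lemma smooth_ddL: "smooth_on Uext (ddL w v)"
  unfolding ddL_def by (intro smooth_on_dirderiv smooth_dL)

lemma in_Uext: "t \<in> I \<Longrightarrow> u \<in> M \<Longrightarrow> y \<noteq> 0 \<Longrightarrow> (t, u, y) \<in> Uext"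
  using domain_subset by auto

lemma Lsq_eq_Lag: "t \<in> I \<Longrightarrow> u \<in> M \<Longrightarrow> y \<noteq> 0 \<Longrightarrow> Lsq (t, u, y) = Lag F t u y"
  by (simp add: Lsq_def Fext_eq Lag_def power2_eq_square)

lemma dY_Lag_eq: "t \<in> I \<Longrightarrow> u \<in> M \<Longrightarrow> y \<noteq> 0 \<Longrightarrow> dY j (Lag F) t u y = dL (y_dir j) (t, u, y)"
  unfolding dY_def dL_def
  by (rule deriv_eq_dirderiv[OF smooth_Lsq in_Uext], assumption+)
     (use eventually_nonzero_line[of y "axis j 1"] in \<open>auto simp: y_dir_def Lsq_eq_Lag elim!: eventually_mono\<close>)

lemma dY_dY_Lag_eq:
  "t \<in> I \<Longrightarrow> u \<in> M \<Longrightarrow> y \<noteq> 0 \<Longrightarrow> dY i (dY j (Lag F)) t u y = ddL (y_dir i) (y_dir j) (t, u, y)"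
  unfolding dY_def[of i] ddL_def
  by (rule deriv_eq_dirderiv[OF smooth_dL in_Uext], assumption+)
     (use eventually_nonzero_line[of y "axis i 1"] in \<open>auto simp: y_dir_def dY_Lag_eq elim!: eventually_mono\<close>)

lemma dU_Lag_eq: "t \<in> I \<Longrightarrow> u \<in> M \<Longrightarrow> y \<noteq> 0 \<Longrightarrow> dU k (Lag F) t u y = dL (u_dir k) (t, u, y)"
  unfolding dU_def dL_def
  by (rule deriv_eq_dirderiv[OF smooth_Lsq in_Uext], assumption+)
     (use eventually_line_in_open[OF open_M, of u "axis k 1"] in \<open>auto simp: u_dir_def Lsq_eq_Lag elim!: eventually_mono\<close>)

lemma dU_dY_Lag_eq:
  "t \<in> I \<Longrightarrow> u \<in> M \<Longrightarrow> y \<noteq> 0 \<Longrightarrow> dU k (dY j (Lag F)) t u y = ddL (u_dir k) (y_dir j) (t, u, y)"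
  unfolding dU_def ddL_def
  by (rule deriv_eq_dirderiv[OF smooth_dL in_Uext], assumption+)
     (use eventually_line_in_open[OF open_M, of u "axis k 1"] in \<open>auto simp: u_dir_def dY_Lag_eq elim!: eventually_mono\<close>)

lemma dT_dY_Lag_eq:
  "open J \<Longrightarrow> J \<subseteq> I \<Longrightarrow> t \<in> J \<Longrightarrow> u \<in> M \<Longrightarrow> y \<noteq> 0 \<Longrightarrow> dT (dY j (Lag F)) t u y = ddL t_dir (y_dir j) (t, u, y)"
  unfolding dT_def ddL_def
  by (rule deriv_eq_dirderiv[OF smooth_dL in_Uext])
     (use eventually_nhds_in_open[of J t] in \<open>auto simp: t_dir_def dY_Lag_eq elim!: eventually_mono\<close>)

lemma linear_dL: "p \<in> Uext \<Longrightarrow> linear (\<lambda>v. dL v p)"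
  unfolding dL_def using smooth_on_linear_dirderiv[OF smooth_Lsq] by blast

lemma linear_ddL: "p \<in> Uext \<Longrightarrow> linear (\<lambda>w. ddL w v p)"
  unfolding ddL_def using smooth_on_linear_dirderiv[OF smooth_dL] by blast

lemma ddL_commute: "p \<in> Uext \<Longrightarrow> ddL w v p = ddL v w p"
  unfolding ddL_def dL_def by (rule dirderiv_commute_real[OF smooth_Lsq])

lemma Lsq_homogeneous:
  "t \<in> I \<Longrightarrow> u \<in> M \<Longrightarrow> y \<noteq> 0 \<Longrightarrow> k > 0 \<Longrightarrow> Lsq (t, u, k *\<^sub>R y) = k\<^sup>2 * Lsq (t, u, y)"
  by (simp add: Lsq_eq_Lag Lag_def homogeneous power_mult_distrib)

lemma dL_y_dir_homogeneous:
  assumes "t \<in> I" "u \<in> M" "y \<noteq> 0" "k > 0"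
  shows "dL (y_dir j) (t, u, k *\<^sub>R y) = k * dL (y_dir j) (t, u, y)"
proof -
  have ky: "k *\<^sub>R y \<noteq> 0" using assms(3,4) by simp
  have A: "DERIV (\<lambda>h. Lsq ((t, u, k *\<^sub>R y) + h *\<^sub>R y_dir j)) 0 :> dL (y_dir j) (t, u, k *\<^sub>R y) * 1"
    unfolding dL_def by (rule DERIV_dirderiv_comp[OF smooth_Lsq in_Uext[OF assms(1,2) ky]]) auto
  have "DERIV (\<lambda>h. Lsq ((t, u, y) + (h / k) *\<^sub>R y_dir j)) 0 :> dL (y_dir j) (t, u, y) * (1 / k)"
    unfolding dL_def using assms(4)
    by (intro DERIV_dirderiv_comp[OF smooth_Lsq in_Uext[OF assms(1,2,3)]]) (auto intro!: derivative_eq_intros)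
  then have B: "DERIV (\<lambda>h. k\<^sup>2 * Lsq ((t, u, y) + (h / k) *\<^sub>R y_dir j)) 0 :> k\<^sup>2 * (dL (y_dir j) (t, u, y) * (1 / k))"
    by (rule DERIV_cmult)
  have "eventually (\<lambda>h. Lsq ((t, u, k *\<^sub>R y) + h *\<^sub>R y_dir j) = k\<^sup>2 * Lsq ((t, u, y) + (h / k) *\<^sub>R y_dir j)) (nhds 0)"
    using eventually_nonzero_line[OF ky, of "axis j 1"]
  proof eventually_elim
    case (elim h)
    have e: "k *\<^sub>R y + h *\<^sub>R axis j 1 = k *\<^sub>R (y + (h / k) *\<^sub>R axis j 1)"
      using assms(4) by (simp add: algebra_simps)
    then have "y + (h / k) *\<^sub>R axis j 1 \<noteq> 0" using elim by auto
    then show ?case using Lsq_homogeneous[OF assms(1,2) _ assms(4)] e by (simp add: y_dir_def)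
  qed
  from DERIV_cong_ev[OF refl this refl] B
  have "DERIV (\<lambda>h. Lsq ((t, u, k *\<^sub>R y) + h *\<^sub>R y_dir j)) 0 :> k\<^sup>2 * (dL (y_dir j) (t, u, y) * (1 / k))"
    by simp
  from DERIV_unique[OF A this] show ?thesis using assms(4) by (simp add: power2_eq_square)
qed

lemma radial_line: "(t, u, y) + (k - 1) *\<^sub>R (0, 0, y) = (t, u, k *\<^sub>R y)"
  by (simp add: algebra_simps)

lemma euler_Lsq:
  assumes "t \<in> I" "u \<in> M" "y \<noteq> 0"
  shows "dL (0, 0, y) (t, u, y) = 2 * Lsq (t, u, y)"
proof -
  have "eventually (\<lambda>k::real. k \<in> {0<..}) (nhds 1)" by (rule eventually_nhds_in_open) auto
  then have "eventually (\<lambda>k. Lsq ((t, u, y) + (k - 1) *\<^sub>R (0, 0, y)) = k ^ 2 * Lsq (t, u, y)) (nhds 1)"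
    by eventually_elim (subst radial_line, simp add: Lsq_homogeneous[OF assms])
  from dirderiv_homogeneous[OF smooth_Lsq in_Uext[OF assms] this] show ?thesis by (simp add: dL_def)
qed

lemma euler_dL:
  assumes "t \<in> I" "u \<in> M" "y \<noteq> 0"
  shows "ddL (0, 0, y) (y_dir j) (t, u, y) = dL (y_dir j) (t, u, y)"
proof -
  have "eventually (\<lambda>k::real. k \<in> {0<..}) (nhds 1)" by (rule eventually_nhds_in_open) auto
  then have "eventually (\<lambda>k. dL (y_dir j) ((t, u, y) + (k - 1) *\<^sub>R (0, 0, y)) = k ^ 1 * dL (y_dir j) (t, u, y)) (nhds 1)"
    by eventually_elim (subst radial_line, simp add: dL_y_dir_homogeneous[OF assms])
  from dirderiv_homogeneous[OF smooth_dL in_Uext[OF assms] this] show ?thesis by (simp add: ddL_def)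
qed

lemma sum_velocity_dL:
  assumes "t \<in> I" "u \<in> M" "y \<noteq> 0"
  shows "(\<Sum>i\<in>UNIV. y $ i * dL (y_dir i) (t, u, y)) = 2 * Lsq (t, u, y)"
  using linear_triple_expansion[OF linear_dL[OF in_Uext[OF assms]], of 0 0 y] euler_Lsq[OF assms]
  by (simp add: y_dir_def linear_0[OF linear_dL[OF in_Uext[OF assms]]])

lemma sum_velocity_ddL:
  assumes "t \<in> I" "u \<in> M" "y \<noteq> 0"
  shows "(\<Sum>i\<in>UNIV. y $ i * ddL (y_dir i) (y_dir j) (t, u, y)) = dL (y_dir j) (t, u, y)"
  using linear_triple_expansion[OF linear_ddL[OF in_Uext[OF assms]], of 0 0 y] euler_dL[OF assms]
  by (simp add: y_dir_def linear_0[OF linear_ddL[OF in_Uext[OF assms]]])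

lemma gmat_eq_ddL:
  "t \<in> I \<Longrightarrow> u \<in> M \<Longrightarrow> y \<noteq> 0 \<Longrightarrow> gmat F t u y $ i $ j = 1/2 * ddL (y_dir i) (y_dir j) (t, u, y)"
  by (simp add: gmat_def dY_dY_Lag_eq)

lemma gmat_symmetric:
  "t \<in> I \<Longrightarrow> u \<in> M \<Longrightarrow> y \<noteq> 0 \<Longrightarrow> gmat F t u y $ i $ j = gmat F t u y $ j $ i"
  using gmat_eq_ddL ddL_commute in_Uext by metis

lemma gmat_mult_velocity:
  assumes "t \<in> I" "u \<in> M" "y \<noteq> 0"
  shows "(\<Sum>i\<in>UNIV. gmat F t u y $ i $ j * y $ i) = 1/2 * dL (y_dir j) (t, u, y)"
  using sum_velocity_ddL[OF assms, of j]
  by (simp add: gmat_eq_ddL[OF assms] sum_divide_distrib[symmetric] mult_ac)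

lemma gform_eq_sum_gmat:
  "gform F t u y V W = (\<Sum>j\<in>UNIV. (\<Sum>i\<in>UNIV. gmat F t u y $ i $ j * V $ i) * W $ j)"
  unfolding gform_def by (subst sum.swap) (simp add: sum_distrib_right sum_distrib_left mult_ac)

lemma gform_velocity:
  assumes "t \<in> I" "u \<in> M" "y \<noteq> 0"
  shows "gform F t u y y W = (\<Sum>j\<in>UNIV. 1/2 * dL (y_dir j) (t, u, y) * W $ j)"
  unfolding gform_eq_sum_gmat gmat_mult_velocity[OF assms] ..

lemma gmat_vector_eq_zero:
  assumes "t \<in> I" "u \<in> M" "y \<noteq> 0" "\<And>j. (\<Sum>i\<in>UNIV. gmat F t u y $ i $ j * w $ i) = 0"
  shows "w = 0"
proof -
  have "gform F t u y w w = 0" unfolding gform_eq_sum_gmat assms(4) by simp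
  then show ?thesis using gform_pos[OF assms(1-3), of w] by force
qed

lemma gmat_ginv:
  assumes "t \<in> I" "u \<in> M" "y \<noteq> 0"
  shows "(\<Sum>i\<in>UNIV. gmat F t u y $ i $ j * ginv F t u y $ i $ l) = (if j = l then 1 else 0)"
proof -
  define gm where "gm = gmat F t u y"
  have "gm *v x = 0 \<Longrightarrow> x = 0" for x
    using gmat_vector_eq_zero[OF assms, of x] gmat_symmetric[OF assms]
    by (simp add: gm_def matrix_vector_mult_def vec_eq_iff mult.commute)
  then obtain B where B: "B ** gm = mat 1" using matrix_left_invertible_ker by blast
  then have "gm ** matrix_inv gm = mat 1"
    using matrix_left_right_inverse unfolding matrix_inv_def by (metis (mono_tags, lifting) someI_ex)
  then have "(\<Sum>i\<in>UNIV. gm $ j $ i * matrix_inv gm $ i $ l) = (if j = l then 1 else 0)"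
    by (simp add: matrix_matrix_mult_def mat_def vec_eq_iff)
  then show ?thesis using gmat_symmetric[OF assms] unfolding gm_def ginv_def by simp
qed

lemma F_zero_vector: "t \<in> I \<Longrightarrow> u \<in> M \<Longrightarrow> F t u 0 = 0"
  using homogeneous[of t u 2 0] by simp

text \<open>The Euler--Lagrange covector (1/2)(d/dt \<partial>L/\<partial>y_j - \<partial>L/\<partial>u_j) of a curve through u with
  velocity y and acceleration a.\<close>

definition el_covector where
  "el_covector t u y a j = 1/2 * (\<Sum>i\<in>UNIV. ddL (y_dir i) (y_dir j) (t, u, y) * a $ i)
     + 1/2 * ((\<Sum>k\<in>UNIV. ddL (u_dir k) (y_dir j) (t, u, y) * y $ k) - dL (u_dir j) (t, u, y))
     + 1/2 * ddL t_dir (y_dir j) (t, u, y)"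

lemma gmat_spray_eq_el_covector:
  assumes J: "open J" "J \<subseteq> I" "t \<in> J" and u: "u \<in> M" and y: "y \<noteq> 0"
  shows "(\<Sum>i\<in>UNIV. gmat F t u y $ i $ j * (a + 2 *\<^sub>R Gspray F t u y + N0 F t u y) $ i) = el_covector t u y a j"
proof -
  have tI: "t \<in> I" using J by blast
  define gm where "gm = gmat F t u y"
  define gi where "gi = ginv F t u y"
  have inv: "\<And>j l. (\<Sum>i\<in>UNIV. gm $ i $ j * gi $ i $ l) = (if j = l then 1 else 0)"
    unfolding gm_def gi_def by (rule gmat_ginv[OF tI u y])
  define R where "R l = (\<Sum>k\<in>UNIV. dU k (dY l (Lag F)) t u y * y $ k) - dU l (Lag F) t u y" for l
  define Tm where "Tm l = dT (dY l (Lag F)) t u y" for l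
  have s2: "(\<Sum>i\<in>UNIV. gm $ i $ j * (2 * Gspray F t u y $ i)) = 1/2 * R j"
    using sum_mult_inverse_contract[OF inv, of j "1/2" R] unfolding Gspray_def gi_def R_def by simp
  have s3: "(\<Sum>i\<in>UNIV. gm $ i $ j * N0 F t u y $ i) = 1/2 * Tm j"
    using sum_mult_inverse_contract[OF inv, of j "1/2" Tm] unfolding N0_def gi_def Tm_def by simp
  have s1: "(\<Sum>i\<in>UNIV. gm $ i $ j * a $ i) = 1/2 * (\<Sum>i\<in>UNIV. ddL (y_dir i) (y_dir j) (t, u, y) * a $ i)"
    unfolding gm_def by (simp add: gmat_eq_ddL[OF tI u y] sum_distrib_left mult_ac)
  have "(\<Sum>i\<in>UNIV. gm $ i $ j * (a + 2 *\<^sub>R Gspray F t u y + N0 F t u y) $ i)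
      = (\<Sum>i\<in>UNIV. gm $ i $ j * a $ i) + (\<Sum>i\<in>UNIV. gm $ i $ j * (2 * Gspray F t u y $ i))
        + (\<Sum>i\<in>UNIV. gm $ i $ j * N0 F t u y $ i)"
    by (simp add: distrib_left sum.distrib)
  also have "\<dots> = el_covector t u y a j"
    unfolding s1 s2 s3 el_covector_def R_def Tm_def
    using dU_Lag_eq[OF tI u y] dU_dY_Lag_eq[OF tI u y] dT_dY_Lag_eq[OF J u y] by simp
  finally show ?thesis unfolding gm_def .
qed

end

section \<open>Unit fiber nets\<close>

text \<open>Gam is a smooth extension of (s, t) \<mapsto> \<gamma> s t to an open set, so that vel, acc and the variation
  var along a direction X of N are directional derivatives of smooth maps.\<close>

locale fiber_net = finsler_extension F I M Fext Uext
  for F :: "'n::finite tfun" and I M Fext Uext +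
  fixes N :: "(real^'n) set" and t0 T :: real and n :: "real^'n \<Rightarrow> real^'n"
    and \<gamma> :: "real^'n \<Rightarrow> real \<Rightarrow> real^'n" and U :: "(real^'n) set"
    and Gam :: "(real^'n) \<times> real \<Rightarrow> real^'n" and V :: "((real^'n) \<times> real) set"
  assumes t0_less_T: "t0 < T" and times_in_I: "{t0..<T} \<subseteq> I" and N_sub_M: "N \<subseteq> M"
    and U_sub_M: "U \<subseteq> M"
    and smooth_Gam: "smooth_on V Gam" and domain_Gam: "N \<times> {t0..<T} \<subseteq> V"
    and Gam_eq: "\<And>s t. s \<in> N \<Longrightarrow> t \<in> {t0..<T} \<Longrightarrow> Gam (s, t) = \<gamma> s t"
    and initial_point: "\<And>s. s \<in> N \<Longrightarrow> \<gamma> s t0 = s"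
    and initial_velocity: "\<And>s. s \<in> N \<Longrightarrow> vector_derivative (\<gamma> s) (at t0 within {t0..<T}) = n s"
    and unit_speed: "\<And>s t. s \<in> N \<Longrightarrow> t \<in> {t0<..<T} \<Longrightarrow> F t (\<gamma> s t) (tvel \<gamma> s t) = 1"
    and unit_normal: "\<And>s. s \<in> N \<Longrightarrow> F t0 s (n s) = 1"
    and normal_orthogonal: "\<And>s X. s \<in> N \<Longrightarrow> X \<in> tangent_space N s \<Longrightarrow> gform F t0 s (n s) (n s) X = 0"
    and open_U: "open U" and bij_net: "bij_betw (\<lambda>(s, t). \<gamma> s t) (N \<times> {t0<..<T}) U"
    and smooth_net_inverse: "smooth_on U (inv_into (N \<times> {t0<..<T}) (\<lambda>(s, t). \<gamma> s t))"
begin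

definition vel where "vel q = dirderiv Gam q (0, 1)"
definition acc where "acc q = dirderiv vel q (0, 1)"
definition lift where "lift s t = (t, Gam (s, t), vel (s, t))"
definition var where "var s X t = dirderiv Gam (s, t) (X, 0)"
definition var_vel where "var_vel s X t = dirderiv vel (s, t) (X, 0)"

lemma smooth_vel: "smooth_on V vel"
  unfolding vel_def by (rule smooth_on_dirderiv[OF smooth_Gam])

lemma in_V: "s \<in> N \<Longrightarrow> t0 \<le> t \<Longrightarrow> t < T \<Longrightarrow> (s, t) \<in> V"
  using domain_Gam by auto

lemma in_I: "t0 \<le> t \<Longrightarrow> t < T \<Longrightarrow> t \<in> I"
  using times_in_I by auto

lemma has_vector_derivative_time:
  assumes f: "smooth_on V f" and s: "s \<in> N" and t: "t0 \<le> t" "t < T"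
  shows "((\<lambda>\<tau>. f (s, \<tau>)) has_vector_derivative dirderiv f (s, t) (0, 1)) (at t)"
  using has_vector_derivative_dirderiv_along_line[of f "(s, 0)" t "(0, 1)"]
    smooth_on_differentiable_line[OF f in_V[OF s t], of "(0, 1)"] by simp

lemma Gam_has_vector_derivative: "s \<in> N \<Longrightarrow> t0 \<le> t \<Longrightarrow> t < T \<Longrightarrow>
    ((\<lambda>\<tau>. Gam (s, \<tau>)) has_vector_derivative vel (s, t)) (at t)"
  unfolding vel_def by (rule has_vector_derivative_time[OF smooth_Gam])

lemma vel_has_vector_derivative: "s \<in> N \<Longrightarrow> t0 \<le> t \<Longrightarrow> t < T \<Longrightarrow>
    ((\<lambda>\<tau>. vel (s, \<tau>)) has_vector_derivative acc (s, t)) (at t)"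
  unfolding acc_def by (rule has_vector_derivative_time[OF smooth_vel])

lemma tvel_eq_vel: assumes s: "s \<in> N" and t: "t \<in> {t0<..<T}" shows "tvel \<gamma> s t = vel (s, t)"
proof -
  have "((\<gamma> s) has_vector_derivative vel (s, t)) (at t)"
    by (rule has_vector_derivative_transform_within_open[OF Gam_has_vector_derivative[OF s] open_greaterThanLessThan t])
       (use t Gam_eq[OF s] in auto)
  then show ?thesis unfolding tvel_def by (rule vector_derivative_at)
qed

lemma tacc_eq_acc: assumes s: "s \<in> N" and t: "t \<in> {t0<..<T}" shows "tacc \<gamma> s t = acc (s, t)"
proof -
  have "((tvel \<gamma> s) has_vector_derivative acc (s, t)) (at t)"
    by (rule has_vector_derivative_transform_within_open[OF vel_has_vector_derivative[OF s] open_greaterThanLessThan t])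
       (use t tvel_eq_vel[OF s] in auto)
  then show ?thesis unfolding tacc_def by (rule vector_derivative_at)
qed

lemma vel_initial: assumes s: "s \<in> N" shows "vel (s, t0) = n s"
proof -
  have "((\<lambda>\<tau>. Gam (s, \<tau>)) has_vector_derivative vel (s, t0)) (at t0 within {t0..<T})"
    using Gam_has_vector_derivative[OF s order.refl t0_less_T] by (rule has_vector_derivative_at_within)
  then have "((\<gamma> s) has_vector_derivative vel (s, t0)) (at t0 within {t0..<T})"
    by (rule has_vector_derivative_transform[rotated 2]) (use t0_less_T Gam_eq[OF s] in auto)
  moreover have "at t0 within {t0..<T} \<noteq> bot"
    using t0_less_T trivial_limit_within[of t0 "{t0..<T}"] by simp
  ultimately show ?thesis
    using vector_derivative_within initial_velocity[OF s] by metis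
qed

lemma Gam_in_M: assumes s: "s \<in> N" and t: "t0 \<le> t" "t < T" shows "Gam (s, t) \<in> M"
proof (cases "t = t0")
  case True then show ?thesis using Gam_eq[OF s] initial_point[OF s] N_sub_M s t0_less_T by auto
next
  case False
  then have "(s, t) \<in> N \<times> {t0<..<T}" using s t by auto
  from bij_betw_apply[OF bij_net this] show ?thesis using Gam_eq[OF s] t U_sub_M by auto
qed

lemma vel_nonzero: assumes s: "s \<in> N" and t: "t0 \<le> t" "t < T" shows "vel (s, t) \<noteq> 0"
proof (cases "t = t0")
  case True
  then show ?thesis
    using unit_normal[OF s] vel_initial[OF s] F_zero_vector[OF in_I[OF t] Gam_in_M[OF s t]]
      Gam_eq[OF s] initial_point[OF s] t by auto
next
  case False
  then have t': "t \<in> {t0<..<T}" using t by auto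
  show ?thesis
    using unit_speed[OF s t'] tvel_eq_vel[OF s t'] F_zero_vector[OF in_I[OF t] Gam_in_M[OF s t]] Gam_eq[OF s] t
    by auto
qed

lemma lift_in_Uext: "s \<in> N \<Longrightarrow> t0 \<le> t \<Longrightarrow> t < T \<Longrightarrow> lift s t \<in> Uext"
  unfolding lift_def by (intro in_Uext in_I Gam_in_M vel_nonzero)

lemma Lsq_lift: assumes s: "s \<in> N" and t: "t \<in> {t0<..<T}" shows "Lsq (lift s t) = 1"
proof -
  have t': "t0 \<le> t" "t < T" using t by auto
  have "Lsq (lift s t) = Lag F t (Gam (s, t)) (vel (s, t))"
    unfolding lift_def by (intro Lsq_eq_Lag in_I Gam_in_M[OF s] vel_nonzero[OF s] t')
  also have "\<dots> = 1" using unit_speed[OF s t] tvel_eq_vel[OF s t] Gam_eq[OF s] t by (simp add: Lag_def)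
  finally show ?thesis .
qed

lemma lift_has_vector_derivative: "s \<in> N \<Longrightarrow> t0 \<le> t \<Longrightarrow> t < T \<Longrightarrow>
    ((lift s) has_vector_derivative (1, vel (s, t), acc (s, t))) (at t)"
  unfolding lift_def
  by (intro has_vector_derivative_Pair Gam_has_vector_derivative vel_has_vector_derivative)
     (auto intro!: derivative_eq_intros)

lemma var_has_vector_derivative: assumes s: "s \<in> N" and t: "t0 \<le> t" "t < T"
  shows "((var s X) has_vector_derivative var_vel s X t) (at t)"
proof -
  have "((\<lambda>\<tau>. dirderiv Gam (s, \<tau>) (X, 0)) has_vector_derivative
      dirderiv (\<lambda>q. dirderiv Gam q (X, 0)) (s, t) (0, 1)) (at t)"
    by (rule has_vector_derivative_time[OF smooth_on_dirderiv[OF smooth_Gam] s t])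
  moreover have "dirderiv (\<lambda>q. dirderiv Gam q (X, 0)) (s, t) (0, 1) = var_vel s X t"
    unfolding var_vel_def vel_def using dirderiv_commute[OF smooth_Gam in_V[OF s t]] by simp
  ultimately show ?thesis unfolding var_def[abs_def] by simp
qed

lemma continuous_lift: "s \<in> N \<Longrightarrow> t0 \<le> t \<Longrightarrow> t < T \<Longrightarrow> continuous (at t) (lift s)"
  using has_vector_derivative_continuous[OF lift_has_vector_derivative] .

lemma continuous_acc: "s \<in> N \<Longrightarrow> t0 \<le> t \<Longrightarrow> t < T \<Longrightarrow> continuous (at t) (\<lambda>\<tau>. acc (s, \<tau>))"
  unfolding acc_def
  by (rule has_vector_derivative_continuous[OF has_vector_derivative_time[OF smooth_on_dirderiv[OF smooth_vel]]])

lemma continuous_along_lift: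
  assumes f: "smooth_on Uext f" and s: "s \<in> N" and t: "t0 \<le> t" "t < T"
  shows "continuous (at t) (\<lambda>\<tau>. f (lift s \<tau>))"
  using continuous_at_compose[OF continuous_lift[OF s t] smooth_on_imp_continuous_at[OF f lift_in_Uext[OF s t]]]
  by (simp add: o_def)

definition tangent_curve where
  "tangent_curve s c X \<longleftrightarrow> c 0 = s \<and> (\<forall>h. c h \<in> N) \<and> (c has_vector_derivative X) (at 0)"

lemma tangent_curve_exists: "X \<in> tangent_space N s \<Longrightarrow> \<exists>c. tangent_curve s c X"
  unfolding tangent_space_def tangent_curve_def by blast

lemma has_vector_derivative_along_tangent_curve:
  assumes f: "smooth_on V f" and s: "s \<in> N" and t: "t0 \<le> t" "t < T" and c: "tangent_curve s c X"
  shows "((\<lambda>h. f (c h, t)) has_vector_derivative dirderiv f (s, t) (X, 0)) (at 0)"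
proof -
  have "((\<lambda>h. (c h, t)) has_vector_derivative (X, 0)) (at 0)"
    using c unfolding tangent_curve_def by (auto intro!: derivative_eq_intros)
  from smooth_on_has_vector_derivative_comp[OF f this] show ?thesis
    using c in_V[OF s t] unfolding tangent_curve_def by simp
qed

lemma var_initial: assumes s: "s \<in> N" and c: "tangent_curve s c X" shows "var s X t0 = X"
proof -
  have "((\<lambda>h. Gam (c h, t0)) has_vector_derivative var s X t0) (at 0)"
    unfolding var_def by (rule has_vector_derivative_along_tangent_curve[OF smooth_Gam s order.refl t0_less_T c])
  moreover have "Gam (c h, t0) = c h" for h
    using c Gam_eq[of "c h" t0] initial_point[of "c h"] t0_less_T unfolding tangent_curve_def by auto
  ultimately show ?thesis using c vector_derivative_unique_at unfolding tangent_curve_def by auto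
qed

text \<open>Differentiating the unit speed condition Lsq (lift (c h) t) = 1 along a curve c in N.\<close>

lemma dL_variation_zero:
  assumes s: "s \<in> N" and t: "t \<in> {t0<..<T}" and c: "tangent_curve s c X"
  shows "(\<Sum>k\<in>UNIV. var s X t $ k * dL (u_dir k) (lift s t)) + (\<Sum>k\<in>UNIV. var_vel s X t $ k * dL (y_dir k) (lift s t)) = 0"
proof -
  have t': "t0 \<le> t" "t < T" using t by auto
  have v: "((\<lambda>h. (t, Gam (c h, t), vel (c h, t))) has_vector_derivative (0, var s X t, var_vel s X t)) (at 0)"
    unfolding var_def var_vel_def
    by (intro has_vector_derivative_Pair has_vector_derivative_along_tangent_curve[OF smooth_Gam s t' c]
        has_vector_derivative_along_tangent_curve[OF smooth_vel s t' c]) (auto intro!: derivative_eq_intros)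
  have "((\<lambda>h. Lsq (t, Gam (c h, t), vel (c h, t))) has_vector_derivative
      dirderiv Lsq (t, Gam (c 0, t), vel (c 0, t)) (0, var s X t, var_vel s X t)) (at 0)"
    by (rule smooth_on_has_vector_derivative_comp[OF smooth_Lsq v])
       (use lift_in_Uext[OF s t'] c in \<open>simp add: lift_def tangent_curve_def\<close>)
  moreover have "Lsq (t, Gam (c h, t), vel (c h, t)) = 1" for h
    using Lsq_lift[of "c h" t] c t unfolding tangent_curve_def lift_def by auto
  ultimately have "((\<lambda>h. 1::real) has_vector_derivative dL (0, var s X t, var_vel s X t) (lift s t)) (at 0)"
    using c unfolding tangent_curve_def dL_def lift_def by simp
  then have "dL (0, var s X t, var_vel s X t) (lift s t) = 0"
    using vector_derivative_unique_at[of "\<lambda>h. 1::real"] by (metis has_vector_derivative_const)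
  then show ?thesis
    using linear_triple_expansion[OF linear_dL[OF lift_in_Uext[OF s t']], of 0 "var s X t" "var_vel s X t"]
    by (simp add: u_dir_def y_dir_def)
qed

definition orth_defect where
  "orth_defect s X t = (\<Sum>j\<in>UNIV. 1/2 * dL (y_dir j) (lift s t) * var s X t $ j)"

definition el_factor where
  "el_factor s t = (\<Sum>j\<in>UNIV. el_covector t (Gam (s, t)) (vel (s, t)) (acc (s, t)) j * vel (s, t) $ j)"

lemma gform_ray_eq: assumes s: "s \<in> N" and t: "t \<in> {t0<..<T}"
  shows "gform F t (\<gamma> s t) (tvel \<gamma> s t) (tvel \<gamma> s t) Z = (\<Sum>j\<in>UNIV. 1/2 * dL (y_dir j) (lift s t) * Z $ j)"
proof -
  have t': "t0 \<le> t" "t < T" using t by auto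
  have "\<gamma> s t = Gam (s, t)" "tvel \<gamma> s t = vel (s, t)" using Gam_eq[OF s] tvel_eq_vel[OF s t] t by auto
  then show ?thesis unfolding lift_def by (simp add: gform_velocity[OF in_I[OF t'] Gam_in_M[OF s t'] vel_nonzero[OF s t']])
qed

lemma orth_defect_initial: assumes s: "s \<in> N" and X: "X \<in> tangent_space N s"
  shows "orth_defect s X t0 = 0"
proof -
  obtain c where c: "tangent_curve s c X" using tangent_curve_exists[OF X] by blast
  have lift0: "lift s t0 = (t0, s, n s)"
    unfolding lift_def using vel_initial[OF s] Gam_eq[OF s, of t0] initial_point[OF s] t0_less_T by auto
  have "n s \<noteq> 0" using vel_nonzero[OF s order.refl t0_less_T] vel_initial[OF s] by simp
  then have "orth_defect s X t0 = gform F t0 s (n s) (n s) X"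
    unfolding orth_defect_def lift0 var_initial[OF s c]
    using gform_velocity[OF in_I[OF order.refl t0_less_T] subsetD[OF N_sub_M s]] by simp
  then show ?thesis using normal_orthogonal[OF s X] by simp
qed

text \<open>The key computation: the term with var_vel cancels against the u-derivative by
  dL_variation_zero, leaving the Euler--Lagrange covector applied to var.\<close>

lemma orth_defect_has_derivative:
  assumes s: "s \<in> N" and t: "t \<in> {t0<..<T}" and c: "tangent_curve s c X"
  shows "DERIV (orth_defect s X) t :> (\<Sum>j\<in>UNIV. var s X t $ j * el_covector t (Gam (s, t)) (vel (s, t)) (acc (s, t)) j)"
proof -
  have t': "t0 \<le> t" "t < T" using t by auto
  define p y a u where "p = lift s t" and "y = vel (s, t)" and "a = acc (s, t)" and "u = Gam (s, t)"
  have p: "p = (t, u, y)" unfolding p_def lift_def u_def y_def by simp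
  have dL: "DERIV (\<lambda>\<tau>. dL (y_dir j) (lift s \<tau>)) t :> ddL (1, y, a) (y_dir j) p" for j
    using smooth_on_has_vector_derivative_comp[OF smooth_dL lift_has_vector_derivative[OF s t'] lift_in_Uext[OF s t']]
    unfolding ddL_def p_def y_def a_def by (simp add: has_real_derivative_iff_has_vector_derivative)
  have dvar: "DERIV (\<lambda>\<tau>. var s X \<tau> $ j) t :> var_vel s X t $ j" for j
    using has_vector_derivative_vec_nth[OF var_has_vector_derivative[OF s t']]
    by (simp add: has_real_derivative_iff_has_vector_derivative)
  have D: "DERIV (orth_defect s X) t :>
      (\<Sum>j\<in>UNIV. 1/2 * ddL (1, y, a) (y_dir j) p * var s X t $ j + 1/2 * dL (y_dir j) p * var_vel s X t $ j)"
    unfolding orth_defect_def[abs_def]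
    by (rule DERIV_sum) (use dL dvar in \<open>auto intro!: derivative_eq_intros simp: p_def\<close>)
  have expand: "ddL (1, y, a) (y_dir j) p = ddL t_dir (y_dir j) p + (\<Sum>k\<in>UNIV. y $ k * ddL (u_dir k) (y_dir j) p)
      + (\<Sum>k\<in>UNIV. a $ k * ddL (y_dir k) (y_dir j) p)" for j
    using linear_triple_expansion[OF linear_ddL[OF lift_in_Uext[OF s t']], of 1 y a] unfolding p_def[symmetric]
    by (simp add: t_dir_def u_dir_def y_dir_def)
  have cancel: "(\<Sum>j\<in>UNIV. dL (y_dir j) p * var_vel s X t $ j) = - (\<Sum>j\<in>UNIV. dL (u_dir j) p * var s X t $ j)"
    using dL_variation_zero[OF s t c] unfolding p_def[symmetric] by (simp add: mult.commute add_eq_0_iff)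
  have "(\<Sum>j\<in>UNIV. 1/2 * ddL (1, y, a) (y_dir j) p * var s X t $ j + 1/2 * dL (y_dir j) p * var_vel s X t $ j)
      = (\<Sum>j\<in>UNIV. 1/2 * ddL (1, y, a) (y_dir j) p * var s X t $ j) + 1/2 * (\<Sum>j\<in>UNIV. dL (y_dir j) p * var_vel s X t $ j)"
    by (simp add: sum.distrib sum_distrib_left mult_ac)
  also have "\<dots> = (\<Sum>j\<in>UNIV. var s X t $ j * el_covector t u y a j)"
    unfolding cancel el_covector_def p[symmetric] expand
    by (simp add: sum_distrib_left sum_distrib_right sum_subtractf sum.distrib algebra_simps mult.commute)
  finally show ?thesis using D unfolding u_def y_def a_def by simp
qed

lemma continuous_orth_defect:
  assumes s: "s \<in> N" and t: "t0 \<le> t" "t < T"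
  shows "continuous (at t) (orth_defect s X)"
proof -
  have "continuous (at t) (\<lambda>\<tau>. dL (y_dir j) (lift s \<tau>))" for j
    by (rule continuous_along_lift[OF smooth_dL s t])
  moreover have "continuous (at t) (var s X)"
    by (rule has_vector_derivative_continuous[OF var_has_vector_derivative[OF s t]])
  ultimately show ?thesis unfolding orth_defect_def by (intro continuous_intros)
qed

lemma continuous_el_factor:
  assumes s: "s \<in> N" and t: "t0 \<le> t" "t < T"
  shows "continuous (at t) (el_factor s)"
proof -
  have "continuous (at t) (\<lambda>\<tau>. dL w (\<tau>, Gam (s, \<tau>), vel (s, \<tau>)))" for w
    using continuous_along_lift[OF smooth_dL s t] unfolding lift_def .
  moreover have "continuous (at t) (\<lambda>\<tau>. ddL w v (\<tau>, Gam (s, \<tau>), vel (s, \<tau>)))" for w v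
    using continuous_along_lift[OF smooth_ddL s t] unfolding lift_def .
  moreover have "continuous (at t) (\<lambda>\<tau>. vel (s, \<tau>))"
    by (rule has_vector_derivative_continuous[OF vel_has_vector_derivative[OF s t]])
  ultimately show ?thesis
    unfolding el_factor_def el_covector_def by (intro continuous_intros continuous_acc[OF s t])
qed

definition velocity_covector where "velocity_covector s t j = 1/2 * dL (y_dir j) (lift s t)"

lemma gmat_mult_vel:
  assumes s: "s \<in> N" and t: "t0 \<le> t" "t < T"
  shows "(\<Sum>i\<in>UNIV. gmat F t (Gam (s, t)) (vel (s, t)) $ i $ j * vel (s, t) $ i) = velocity_covector s t j"
  using gmat_mult_velocity[OF in_I[OF t] Gam_in_M[OF s t] vel_nonzero[OF s t]]
  by (simp add: velocity_covector_def lift_def)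

lemma vel_velocity_covector:
  assumes s: "s \<in> N" and t: "t \<in> {t0<..<T}"
  shows "(\<Sum>j\<in>UNIV. vel (s, t) $ j * velocity_covector s t j) = 1"
proof -
  have t': "t0 \<le> t" "t < T" using t by auto
  have "(\<Sum>j\<in>UNIV. vel (s, t) $ j * dL (y_dir j) (lift s t)) = 2 * Lsq (lift s t)"
    unfolding lift_def by (rule sum_velocity_dL[OF in_I[OF t'] Gam_in_M[OF s t'] vel_nonzero[OF s t']])
  then show ?thesis
    using Lsq_lift[OF s t] by (simp add: velocity_covector_def sum_divide_distrib[symmetric] mult_ac)
qed

lemma el_covector_ray:
  assumes s: "s \<in> N" and t: "t \<in> {t0<..<T}"
  shows "el_covector t (Gam (s, t)) (vel (s, t)) (acc (s, t)) j
    = (\<Sum>i\<in>UNIV. gmat F t (Gam (s, t)) (vel (s, t)) $ i $ j *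
        (tacc \<gamma> s t + 2 *\<^sub>R Gspray F t (\<gamma> s t) (tvel \<gamma> s t) + N0 F t (\<gamma> s t) (tvel \<gamma> s t)) $ i)"
proof -
  have t': "t0 \<le> t" "t < T" using t by auto
  have J: "{t0<..<T} \<subseteq> I" using times_in_I by auto
  have "\<gamma> s t = Gam (s, t)" "tvel \<gamma> s t = vel (s, t)" "tacc \<gamma> s t = acc (s, t)"
    using Gam_eq[OF s] tvel_eq_vel[OF s t] tacc_eq_acc[OF s t] t by auto
  then show ?thesis
    using gmat_spray_eq_el_covector[OF open_greaterThanLessThan J t Gam_in_M[OF s t'] vel_nonzero[OF s t']]
    by simp
qed

lemma pre_extremal_iff_el_covector:
  assumes s: "s \<in> N" and t: "t \<in> {t0<..<T}"
  shows "\<rho> *\<^sub>R tvel \<gamma> s t = tacc \<gamma> s t + 2 *\<^sub>R Gspray F t (\<gamma> s t) (tvel \<gamma> s t) + N0 F t (\<gamma> s t) (tvel \<gamma> s t)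
    \<longleftrightarrow> (\<forall>j. el_covector t (Gam (s, t)) (vel (s, t)) (acc (s, t)) j = \<rho> * velocity_covector s t j)"
    (is "\<rho> *\<^sub>R _ = ?E \<longleftrightarrow> _")
proof -
  have t': "t0 \<le> t" "t < T" using t by auto
  have vel: "tvel \<gamma> s t = vel (s, t)" using tvel_eq_vel[OF s t] .
  define gm where "gm = gmat F t (Gam (s, t)) (vel (s, t))"
  have contract: "(\<Sum>i\<in>UNIV. gm $ i $ j * (?E - \<rho> *\<^sub>R vel (s, t)) $ i)
      = el_covector t (Gam (s, t)) (vel (s, t)) (acc (s, t)) j - \<rho> * velocity_covector s t j" for j
  proof -
    have "(\<Sum>i\<in>UNIV. gm $ i $ j * (?E - \<rho> *\<^sub>R vel (s, t)) $ i)
        = (\<Sum>i\<in>UNIV. gm $ i $ j * ?E $ i) - \<rho> * (\<Sum>i\<in>UNIV. gm $ i $ j * vel (s, t) $ i)"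
      by (simp add: algebra_simps sum_subtractf sum_distrib_left)
    then show ?thesis unfolding gm_def el_covector_ray[OF s t, of j] gmat_mult_vel[OF s t', of j] .
  qed
  have "\<rho> *\<^sub>R vel (s, t) = ?E \<longleftrightarrow> ?E - \<rho> *\<^sub>R vel (s, t) = 0" by auto
  also have "\<dots> \<longleftrightarrow> (\<forall>j. (\<Sum>i\<in>UNIV. gm $ i $ j * (?E - \<rho> *\<^sub>R vel (s, t)) $ i) = 0)"
  proof
    assume z: "?E - \<rho> *\<^sub>R vel (s, t) = 0"
    show "\<forall>j. (\<Sum>i\<in>UNIV. gm $ i $ j * (?E - \<rho> *\<^sub>R vel (s, t)) $ i) = 0" unfolding z by simp
  next
    assume "\<forall>j. (\<Sum>i\<in>UNIV. gm $ i $ j * (?E - \<rho> *\<^sub>R vel (s, t)) $ i) = 0"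
    then show "?E - \<rho> *\<^sub>R vel (s, t) = 0"
      using gmat_vector_eq_zero[OF in_I[OF t'] Gam_in_M[OF s t'] vel_nonzero[OF s t']] unfolding gm_def by blast
  qed
  also have "\<dots> \<longleftrightarrow> (\<forall>j. el_covector t (Gam (s, t)) (vel (s, t)) (acc (s, t)) j = \<rho> * velocity_covector s t j)"
    unfolding contract by simp
  finally show ?thesis unfolding vel .
qed

lemma el_factor_eq:
  assumes s: "s \<in> N" and t: "t \<in> {t0<..<T}"
    and el: "\<And>j. el_covector t (Gam (s, t)) (vel (s, t)) (acc (s, t)) j = \<rho> * velocity_covector s t j"
  shows "el_factor s t = \<rho>"
  using vel_velocity_covector[OF s t]
  unfolding el_factor_def el by (simp add: sum_distrib_left[symmetric] mult_ac)

lemma orth_defect_zero_if_pre_extremal: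
  assumes A: "\<forall>s\<in>N. \<forall>t\<in>{t0<..<T}. \<rho> s t *\<^sub>R tvel \<gamma> s t =
            tacc \<gamma> s t + 2 *\<^sub>R Gspray F t (\<gamma> s t) (tvel \<gamma> s t) + N0 F t (\<gamma> s t) (tvel \<gamma> s t)"
    and s: "s \<in> N" and t: "t \<in> {t0<..<T}" and X: "X \<in> tangent_space N s"
  shows "orth_defect s X t = 0"
proof -
  obtain c where c: "tangent_curve s c X" using tangent_curve_exists[OF X] by blast
  have "DERIV (orth_defect s X) \<tau> :> el_factor s \<tau> * orth_defect s X \<tau>" if \<tau>: "t0 < \<tau>" "\<tau> < t" for \<tau>
  proof -
    have \<tau>': "\<tau> \<in> {t0<..<T}" using \<tau> t by auto
    have el: "el_covector \<tau> (Gam (s, \<tau>)) (vel (s, \<tau>)) (acc (s, \<tau>)) j = \<rho> s \<tau> * velocity_covector s \<tau> j" for j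
      using A s \<tau>' pre_extremal_iff_el_covector[OF s \<tau>'] by blast
    from orth_defect_has_derivative[OF s \<tau>' c] show ?thesis
      unfolding el el_factor_eq[OF s \<tau>' el] orth_defect_def velocity_covector_def
      by (simp add: sum_distrib_left mult_ac)
  qed
  moreover have "continuous_on {t0..t} f" if "\<And>\<tau>. t0 \<le> \<tau> \<Longrightarrow> \<tau> < T \<Longrightarrow> continuous (at \<tau>) f"
    for f :: "real \<Rightarrow> real"
    using that t by (intro continuous_at_imp_continuous_on) auto
  ultimately show ?thesis
    using t continuous_orth_defect[OF s] continuous_el_factor[OF s] orth_defect_initial[OF s X]
    by (intro linear_ode_initial_zero[of t0 t "orth_defect s X" "el_factor s"]) auto
qed

lemma has_derivative_net_eq_var:
  assumes s: "s \<in> N" and t: "t \<in> {t0<..<T}" and X: "X \<in> tangent_space N s"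
    and D: "((\<lambda>(s', t'). \<gamma> s' t') has_derivative D) (at (s, t) within N \<times> {t0<..<T})"
  shows "D (X, 0) = var s X t"
proof -
  obtain c where c: "tangent_curve s c X" using tangent_curve_exists[OF X] by blast
  have t': "t0 \<le> t" "t < T" using t by auto
  have curve: "((\<lambda>h. (c h, t)) has_derivative (\<lambda>h. h *\<^sub>R (X, 0))) (at 0)"
    using c unfolding tangent_curve_def has_vector_derivative_def by (auto intro!: derivative_eq_intros)
  have "range (\<lambda>h. (c h, t)) \<subseteq> N \<times> {t0<..<T}" using c t unfolding tangent_curve_def by auto
  then have "((\<lambda>(s', t'). \<gamma> s' t') has_derivative D) (at ((\<lambda>h. (c h, t)) 0) within range (\<lambda>h. (c h, t)))"
    using has_derivative_subset[OF D] c unfolding tangent_curve_def by simp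
  from has_derivative_in_compose[OF curve this]
  have "((\<lambda>h. \<gamma> (c h) t) has_vector_derivative D (X, 0)) (at 0)"
    using linear_scale[OF has_derivative_linear[OF D], of _ "(X, 0)"]
    unfolding has_vector_derivative_def by simp
  moreover have "((\<lambda>h. Gam (c h, t)) has_vector_derivative var s X t) (at 0)"
    unfolding var_def by (rule has_vector_derivative_along_tangent_curve[OF smooth_Gam s t' c])
  moreover have "Gam (c h, t) = \<gamma> (c h) t" for h
    using Gam_eq[of "c h" t] c t' unfolding tangent_curve_def by auto
  ultimately show ?thesis using vector_derivative_unique_at by auto
qed

lemma hamilton_orthogonal_iff_orth_defect:
  assumes s: "s \<in> N" and t: "t \<in> {t0<..<T}"
  shows "(\<forall>D. ((\<lambda>(s', t'). \<gamma> s' t') has_derivative D) (at (s, t) within N \<times> {t0<..<T}) \<longrightarrow>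
        (\<forall>X\<in>tangent_space N s. gform F t (\<gamma> s t) (tvel \<gamma> s t) (tvel \<gamma> s t) (D (X, 0)) = 0))
    \<longleftrightarrow> (\<forall>X\<in>tangent_space N s. orth_defect s X t = 0)"
proof -
  have t': "t0 \<le> t" "t < T" using t by auto
  have defect: "gform F t (\<gamma> s t) (tvel \<gamma> s t) (tvel \<gamma> s t) (var s X t) = orth_defect s X t" for X
    unfolding gform_ray_eq[OF s t] orth_defect_def ..
  have "(Gam has_derivative (\<lambda>w. dirderiv Gam (s, t) w)) (at (s, t) within N \<times> {t0<..<T})"
    using smooth_on_has_derivative[OF smooth_Gam in_V[OF s t']] by (rule has_derivative_at_withinI)
  then have dGam: "((\<lambda>(s', t'). \<gamma> s' t') has_derivative (\<lambda>w. dirderiv Gam (s, t) w)) (at (s, t) within N \<times> {t0<..<T})"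
    by (rule has_derivative_transform_within[of _ _ _ _ 1]) (use s t Gam_eq in auto)
  show ?thesis
  proof (intro iffI ballI allI impI)
    fix X assume "\<forall>D. ((\<lambda>(s', t'). \<gamma> s' t') has_derivative D) (at (s, t) within N \<times> {t0<..<T}) \<longrightarrow>
        (\<forall>X\<in>tangent_space N s. gform F t (\<gamma> s t) (tvel \<gamma> s t) (tvel \<gamma> s t) (D (X, 0)) = 0)"
      and X: "X \<in> tangent_space N s"
    then have "gform F t (\<gamma> s t) (tvel \<gamma> s t) (tvel \<gamma> s t) (var s X t) = 0"
      using dGam unfolding var_def by blast
    then show "orth_defect s X t = 0" unfolding defect .
  next
    fix D X assume "\<forall>X\<in>tangent_space N s. orth_defect s X t = 0"
      and D: "((\<lambda>(s', t'). \<gamma> s' t') has_derivative D) (at (s, t) within N \<times> {t0<..<T})"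
      and X: "X \<in> tangent_space N s"
    then show "gform F t (\<gamma> s t) (tvel \<gamma> s t) (tvel \<gamma> s t) (D (X, 0)) = 0"
      unfolding has_derivative_net_eq_var[OF s t X D] defect by blast
  qed
qed

definition net_inv where "net_inv = inv_into (N \<times> {t0<..<T}) (\<lambda>(s, t). \<gamma> s t)"

lemma net_inv_in: "x \<in> U \<Longrightarrow> net_inv x \<in> N \<times> {t0<..<T}"
  unfolding net_inv_def using bij_betw_apply[OF bij_betw_inv_into[OF bij_net]] .

lemma Gam_net_inv: assumes "x \<in> U" shows "Gam (net_inv x) = x"
proof -
  obtain a b where ab: "net_inv x = (a, b)" by fastforce
  then have "a \<in> N" "b \<in> {t0<..<T}" using net_inv_in[OF assms] by auto
  moreover have "\<gamma> a b = x"
    using f_inv_into_f[of x "\<lambda>(s, t). \<gamma> s t" "N \<times> {t0<..<T}"] bij_net assms ab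
    unfolding net_inv_def bij_betw_def by auto
  ultimately show ?thesis using ab Gam_eq by auto
qed

lemma net_inv_net: "s \<in> N \<Longrightarrow> t \<in> {t0<..<T} \<Longrightarrow> net_inv (\<gamma> s t) = (s, t)"
  unfolding net_inv_def using bij_betw_imp_inj_on[OF bij_net] inv_into_f_f[of "\<lambda>(s, t). \<gamma> s t"] by fastforce

lemma dGam_dirderiv_net_inv:
  assumes s: "s \<in> N" and t: "t \<in> {t0<..<T}"
  shows "dirderiv Gam (s, t) (dirderiv net_inv (\<gamma> s t) v) = v"
proof -
  define q where "q = \<gamma> s t"
  have qU: "q \<in> U" using bij_betw_apply[OF bij_net] s t unfolding q_def by auto
  have "((\<lambda>h. net_inv (q + h *\<^sub>R v)) has_vector_derivative dirderiv net_inv q v) (at 0)"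
    by (rule smooth_on_has_vector_derivative_dirderiv[OF smooth_net_inverse[folded net_inv_def] qU])
  then have "((\<lambda>h. Gam (net_inv (q + h *\<^sub>R v))) has_vector_derivative dirderiv Gam (s, t) (dirderiv net_inv q v)) (at 0)"
    using smooth_on_has_vector_derivative_comp[OF smooth_Gam] net_inv_net[OF s t] in_V[OF s] t
    unfolding q_def by fastforce
  moreover have "eventually (\<lambda>h. Gam (net_inv (q + h *\<^sub>R v)) = q + h *\<^sub>R v) (nhds 0)"
    using eventually_line_in_open[OF open_U qU, of v] by eventually_elim (rule Gam_net_inv)
  ultimately have "((\<lambda>h. q + h *\<^sub>R v) has_vector_derivative dirderiv Gam (s, t) (dirderiv net_inv q v)) (at 0)"
    using has_vector_derivative_cong_ev[where S=UNIV and x=0 and f="\<lambda>h. Gam (net_inv (q + h *\<^sub>R v))"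
        and g="\<lambda>h. q + h *\<^sub>R v"] Gam_net_inv[OF qU]
    by (auto simp: eventually_mono)
  moreover have "((\<lambda>h. q + h *\<^sub>R v) has_vector_derivative v) (at 0)"
    by (auto intro!: derivative_eq_intros)
  ultimately show ?thesis unfolding q_def using vector_derivative_unique_at by blast
qed

lemma fst_dirderiv_net_inv_tangent:
  assumes s: "s \<in> N" and t: "t \<in> {t0<..<T}"
  shows "fst (dirderiv net_inv (\<gamma> s t) v) \<in> tangent_space N s"
proof -
  define q where "q = \<gamma> s t"
  have qU: "q \<in> U" using bij_betw_apply[OF bij_net] s t unfolding q_def by auto
  have iq: "net_inv q = (s, t)" unfolding q_def by (rule net_inv_net[OF s t])
  have "((\<lambda>h. net_inv (q + h *\<^sub>R v)) has_vector_derivative dirderiv net_inv q v) (at 0)"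
    by (rule smooth_on_has_vector_derivative_dirderiv[OF smooth_net_inverse[folded net_inv_def] qU])
  then have hv: "((\<lambda>h. fst (net_inv (q + h *\<^sub>R v))) has_vector_derivative fst (dirderiv net_inv q v)) (at 0)"
    using bounded_linear.has_derivative[OF bounded_linear_fst] unfolding has_vector_derivative_def by fastforce
  define c where "c h = (if q + h *\<^sub>R v \<in> U then fst (net_inv (q + h *\<^sub>R v)) else s)" for h
  have "eventually (\<lambda>h. fst (net_inv (q + h *\<^sub>R v)) = c h) (nhds 0)"
    using eventually_line_in_open[OF open_U qU, of v] by eventually_elim (simp add: c_def)
  then have "(c has_vector_derivative fst (dirderiv net_inv q v)) (at 0)"
    using has_vector_derivative_cong_ev[where S=UNIV and x=0 and f="\<lambda>h. fst (net_inv (q + h *\<^sub>R v))" and g=c] hv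
    by (auto simp: eventually_mono c_def qU)
  moreover have "c 0 = s" "c h \<in> N" for h
    using qU iq net_inv_in s by (auto simp: c_def mem_Times_iff)
  ultimately show ?thesis unfolding tangent_space_def q_def by blast
qed

lemma dGam_surjective:
  assumes s: "s \<in> N" and t: "t \<in> {t0<..<T}"
  shows "\<exists>X\<in>tangent_space N s. \<exists>\<tau>. dirderiv Gam (s, t) (X, \<tau>) = v"
  using fst_dirderiv_net_inv_tangent[OF s t] dGam_dirderiv_net_inv[OF s t]
  by (metis prod.collapse)

lemma hamilton_orthogonal_if_pre_extremal:
  assumes "\<exists>\<rho> :: real^'n \<Rightarrow> real \<Rightarrow> real. \<forall>s\<in>N. \<forall>t\<in>{t0<..<T}.
      \<rho> s t *\<^sub>R tvel \<gamma> s t = tacc \<gamma> s t + 2 *\<^sub>R Gspray F t (\<gamma> s t) (tvel \<gamma> s t) + N0 F t (\<gamma> s t) (tvel \<gamma> s t)"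
  shows "\<forall>s\<in>N. \<forall>t\<in>{t0<..<T}. \<forall>D. ((\<lambda>(s', t'). \<gamma> s' t') has_derivative D) (at (s, t) within N \<times> {t0<..<T}) \<longrightarrow>
      (\<forall>X\<in>tangent_space N s. gform F t (\<gamma> s t) (tvel \<gamma> s t) (tvel \<gamma> s t) (D (X, 0)) = 0)"
  using assms orth_defect_zero_if_pre_extremal hamilton_orthogonal_iff_orth_defect by blast

lemma el_covector_var_zero:
  assumes zero: "\<And>\<tau>. \<tau> \<in> {t0<..<T} \<Longrightarrow> orth_defect s X \<tau> = 0"
    and s: "s \<in> N" and t: "t \<in> {t0<..<T}" and X: "X \<in> tangent_space N s"
  shows "(\<Sum>j\<in>UNIV. var s X t $ j * el_covector t (Gam (s, t)) (vel (s, t)) (acc (s, t)) j) = 0"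
proof -
  obtain c where c: "tangent_curve s c X" using tangent_curve_exists[OF X] by blast
  have ev: "eventually (\<lambda>\<tau>. orth_defect s X \<tau> = 0) (nhds t)"
    using eventually_nhds_in_open[OF open_greaterThanLessThan t] by eventually_elim (rule zero)
  have "DERIV (\<lambda>\<tau>. 0::real) t :> 0" by simp
  then have "DERIV (orth_defect s X) t :> 0" using DERIV_cong_ev[OF refl ev refl] by simp
  with orth_defect_has_derivative[OF s t c] show ?thesis by (rule DERIV_unique)
qed

lemma el_covector_proportional_if_orth_defect_zero:
  assumes zero: "\<And>s t X. s \<in> N \<Longrightarrow> t \<in> {t0<..<T} \<Longrightarrow> X \<in> tangent_space N s \<Longrightarrow> orth_defect s X t = 0"
    and s: "s \<in> N" and t: "t \<in> {t0<..<T}"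
  shows "el_covector t (Gam (s, t)) (vel (s, t)) (acc (s, t)) k = el_factor s t * velocity_covector s t k"
proof -
  have t': "t0 \<le> t" "t < T" using t by auto
  define \<beta> where "\<beta> j = el_covector t (Gam (s, t)) (vel (s, t)) (acc (s, t)) j" for j
  define \<rho> where "\<rho> = el_factor s t"
  have vel_\<beta>: "(\<Sum>j\<in>UNIV. vel (s, t) $ j * \<beta> j) = \<rho>"
    unfolding \<rho>_def el_factor_def \<beta>_def by (simp add: mult.commute)
  have var_\<beta>: "(\<Sum>j\<in>UNIV. var s X t $ j * \<beta> j) = 0" if "X \<in> tangent_space N s" for X
    unfolding \<beta>_def using el_covector_var_zero[OF zero[OF s] s t that] that by blast
  have var_covector: "(\<Sum>j\<in>UNIV. var s X t $ j * velocity_covector s t j) = 0" if "X \<in> tangent_space N s" for X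
    using zero[OF s t that] unfolding orth_defect_def velocity_covector_def by (simp add: mult_ac)
  obtain X \<tau> where X: "X \<in> tangent_space N s" and "dirderiv Gam (s, t) (X, \<tau>) = axis k 1"
    using dGam_surjective[OF s t] by blast
  moreover have "dirderiv Gam (s, t) (X, \<tau>) = var s X t + \<tau> *\<^sub>R vel (s, t)"
    using linear_add[OF smooth_on_linear_dirderiv[OF smooth_Gam in_V[OF s t']], of "(X, 0)" "\<tau> *\<^sub>R (0, 1)"]
      linear_scale[OF smooth_on_linear_dirderiv[OF smooth_Gam in_V[OF s t']], of \<tau> "(0, 1)"]
    by (simp add: var_def vel_def)
  ultimately have axis: "axis k 1 = var s X t + \<tau> *\<^sub>R vel (s, t)" by simp
  have "\<beta> k - \<rho> * velocity_covector s t k = (\<Sum>j\<in>UNIV. axis k 1 $ j * (\<beta> j - \<rho> * velocity_covector s t j))"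
    by (simp add: axis_def if_distrib[of "\<lambda>x. x * _"] cong: if_cong)
  also have "\<dots> = (\<Sum>j\<in>UNIV. var s X t $ j * \<beta> j) - \<rho> * (\<Sum>j\<in>UNIV. var s X t $ j * velocity_covector s t j)
      + \<tau> * ((\<Sum>j\<in>UNIV. vel (s, t) $ j * \<beta> j) - \<rho> * (\<Sum>j\<in>UNIV. vel (s, t) $ j * velocity_covector s t j))"
    unfolding axis by (simp add: algebra_simps sum.distrib sum_subtractf sum_distrib_left)
  also have "\<dots> = 0"
    unfolding var_\<beta>[OF X] var_covector[OF X] vel_\<beta> vel_velocity_covector[OF s t] by simp
  finally show ?thesis unfolding \<beta>_def \<rho>_def by simp
qed

lemma pre_extremal_if_hamilton_orthogonal:
  assumes "\<forall>s\<in>N. \<forall>t\<in>{t0<..<T}. \<forall>D. ((\<lambda>(s', t'). \<gamma> s' t') has_derivative D) (at (s, t) within N \<times> {t0<..<T}) \<longrightarrow>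
      (\<forall>X\<in>tangent_space N s. gform F t (\<gamma> s t) (tvel \<gamma> s t) (tvel \<gamma> s t) (D (X, 0)) = 0)"
  shows "\<exists>\<rho> :: real^'n \<Rightarrow> real \<Rightarrow> real. \<forall>s\<in>N. \<forall>t\<in>{t0<..<T}.
      \<rho> s t *\<^sub>R tvel \<gamma> s t = tacc \<gamma> s t + 2 *\<^sub>R Gspray F t (\<gamma> s t) (tvel \<gamma> s t) + N0 F t (\<gamma> s t) (tvel \<gamma> s t)"
proof (intro exI[of _ el_factor] ballI)
  fix s t assume s: "s \<in> N" and t: "t \<in> {t0<..<T}"
  have "\<And>s t X. s \<in> N \<Longrightarrow> t \<in> {t0<..<T} \<Longrightarrow> X \<in> tangent_space N s \<Longrightarrow> orth_defect s X t = 0"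
    using assms hamilton_orthogonal_iff_orth_defect by blast
  from el_covector_proportional_if_orth_defect_zero[OF this s t] show
    "el_factor s t *\<^sub>R tvel \<gamma> s t = tacc \<gamma> s t + 2 *\<^sub>R Gspray F t (\<gamma> s t) (tvel \<gamma> s t) + N0 F t (\<gamma> s t) (tvel \<gamma> s t)"
    using pre_extremal_iff_el_covector[OF s t] by blast
qed

end

lemma fiber_net_of_unit_fiber_net:
  assumes F: "time_finsler I M F" and "t0 < T" "{t0..<T} \<subseteq> I" "N \<subseteq> M"
    and n: "unit_normal_field F t0 N n" and "U \<subseteq> M" and net: "unit_fiber_net F N t0 T n \<gamma> U"
  obtains Fext Uext Gam V where "fiber_net F I M Fext Uext N t0 T n \<gamma> U Gam V"
proof -
  have "smooth_on_set (I \<times> M \<times> (UNIV - {0})) (\<lambda>(t, u, y). F t u y)"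
    using F by (simp add: time_finsler_def)
  then obtain Uext Fext where Fext: "I \<times> M \<times> (UNIV - {0}) \<subseteq> Uext" "smooth_on Uext Fext"
    "\<And>p. p \<in> I \<times> M \<times> (UNIV - {0}) \<Longrightarrow> Fext p = (\<lambda>(t, u, y). F t u y) p"
    unfolding smooth_on_set_def by blast
  have "smooth_on_set (N \<times> {t0..<T}) (\<lambda>(s, t). \<gamma> s t)"
    using net by (simp add: unit_fiber_net_def)
  then obtain V Gam where Gam: "N \<times> {t0..<T} \<subseteq> V" "smooth_on V Gam"
    "\<And>p. p \<in> N \<times> {t0..<T} \<Longrightarrow> Gam p = (\<lambda>(s, t). \<gamma> s t) p"
    unfolding smooth_on_set_def by blast
  have "fiber_net F I M Fext Uext N t0 T n \<gamma> U Gam V"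
  proof unfold_locales
    show "\<And>t u y. t \<in> I \<Longrightarrow> u \<in> M \<Longrightarrow> y \<noteq> 0 \<Longrightarrow> Fext (t, u, y) = F t u y" using Fext(3) by auto
    show "\<And>s t. s \<in> N \<Longrightarrow> t \<in> {t0..<T} \<Longrightarrow> Gam (s, t) = \<gamma> s t" using Gam(3) by auto
  qed (use assms Fext(1,2) Gam(1,2) in \<open>simp_all add: time_finsler_def unit_normal_field_def unit_fiber_net_def\<close>)
  then show ?thesis by (rule that)
qed

theorem mainTheorem3:
  fixes F :: "'n::finite tfun"
    and I :: "real set" and M N U :: "(real^'n) set"
    and t0 T :: real and n :: "real^'n \<Rightarrow> real^'n"
    and \<gamma> :: "real^'n \<Rightarrow> real \<Rightarrow> real^'n"
  assumes "time_finsler I M F"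
    and "t0 < T" and "{t0..<T} \<subseteq> I"
    and "N \<subseteq> M" and "embedded_hypersurface N" and "orientable_hypersurface N"
    and "unit_normal_field F t0 N n"
    and "U \<subseteq> M"
    and "unit_fiber_net F N t0 T n \<gamma> U"
  shows "(\<exists>\<rho> :: real^'n \<Rightarrow> real \<Rightarrow> real. \<forall>s\<in>N. \<forall>t\<in>{t0<..<T}.
            \<rho> s t *\<^sub>R tvel \<gamma> s t =
              tacc \<gamma> s t + 2 *\<^sub>R Gspray F t (\<gamma> s t) (tvel \<gamma> s t) + N0 F t (\<gamma> s t) (tvel \<gamma> s t))
     \<longleftrightarrow>
     (\<forall>s\<in>N. \<forall>t\<in>{t0<..<T}. \<forall>D. ((\<lambda>(s', t'). \<gamma> s' t') has_derivative D) (at (s, t) within N \<times> {t0<..<T}) \<longrightarrow>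
        (\<forall>X\<in>tangent_space N s. gform F t (\<gamma> s t) (tvel \<gamma> s t) (tvel \<gamma> s t) (D (X, 0)) = 0))"
proof -
  obtain Fext Uext Gam V where "fiber_net F I M Fext Uext N t0 T n \<gamma> U Gam V"
    using fiber_net_of_unit_fiber_net[OF assms(1-4,7-9)] .
  then interpret fiber_net F I M Fext Uext N t0 T n \<gamma> U Gam V .
  show ?thesis
    using hamilton_orthogonal_if_pre_extremal pre_extremal_if_hamilton_orthogonal by (intro iffI)
qed

end
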